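(* Let $F$ be a field, $n\ge1$, and $a\in\mathrm{M}_n(F)$. Then: (i) there exists $g\in\mathrm{GL}_n(F)$ with (1) $gag^{-1}={}^{\top}a$ and (2) ${}^{\top}g=g$; (ii) if the minimal polynomial and the characteristic polynomial of $a$ coincide (equivalently, the $F[X]$-module $V_a$ is cyclic), then every $g\in\mathrm{GL}_n(F)$ satisfying (1) also satisfies (2); (iii) if the minimal and characteristic polynomials of $a$ differ (equivalently, $V_a$ is not cyclic), then there exists $g\in\mathrm{GL}_n(F)$ satisfying (1) but not (2).
   Context: ${}^{\top}$ denotes matrix transpose. $V_a$ denotes $V=F^n$ (column vectors) with the $F[X]$-module structure $f(X)v=f(a)v$. *)

theory Defs
  imports "Jordan_Normal_Form.Char_Poly" "Jordan_Normal_Form.Gauss_Jordan_Elimination"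
begin

definition GL :: "nat \<Rightarrow> 'a :: field mat set" where
  "GL n = {g \<in> carrier_mat n n. invertible_mat g}"

definition inv_mat :: "'a :: field mat \<Rightarrow> 'a mat" where
  "inv_mat g = the (mat_inverse g)"

definition poly_mat :: "'a :: field poly \<Rightarrow> 'a mat \<Rightarrow> 'a mat" where
  "poly_mat f A = fold_coeffs (\<lambda>c M. c \<cdot>\<^sub>m 1\<^sub>m (dim_row A) + A * M) f (0\<^sub>m (dim_row A) (dim_row A))"

definition min_poly :: "'a :: field mat \<Rightarrow> 'a poly" where
  "min_poly A = (THE p. monic p \<and> (\<forall>f. poly_mat f A = 0\<^sub>m (dim_row A) (dim_row A) \<longleftrightarrow> p dvd f))"

end

theory Submission
  imports Defs
begin

text \<open>
  Choose a vector \<open>v\<close> whose local minimal polynomial \<open>m\<close> is the minimal polynomial of \<open>a\<close>, let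
  \<open>d = deg m\<close> and \<open>K = (v, a v, \<dots>, a\<^bsup>d-1\<^esup> v)\<close>, so that \<open>a K = K D\<close> for the companion matrix \<open>D\<close>
  of \<open>m\<close>. A functional \<open>l\<close> with \<open>l(a\<^sup>j v) = 1\<close> for \<open>j = d - 1\<close> and \<open>0\<close> for \<open>j < d - 1\<close> gives the
  matrix \<open>\<Phi>\<close> with rows \<open>l\<^sup>T a\<^sup>k\<close>, \<open>k < d\<close>. Then \<open>\<Phi> a = D\<^sup>T \<Phi>\<close>, the Hankel matrix \<open>H = \<Phi> K\<close> is
  symmetric, invertible and satisfies \<open>H D = D\<^sup>T H\<close>, and \<open>ker \<Phi>\<close> is an \<open>a\<close>-invariant complement of
  the cyclic subspace. So \<open>a\<close> is similar to \<open>diag(D, Y)\<close>, and \<open>diag(H, G)\<close>, where by induction \<open>G\<close>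
  is symmetric, invertible and satisfies \<open>G Y = Y\<^sup>T G\<close>, yields a symmetric \<open>g\<close> with \<open>g a = a\<^sup>T g\<close>.

  If \<open>a\<close> is cyclic, \<open>g a = a\<^sup>T g\<close> gives \<open>a\<^sup>i v \<bullet> g a\<^sup>j v = v \<bullet> g a\<^bsup>i+j\<^esup> v\<close>, so the bilinear form of
  \<open>g\<close> is symmetric on a basis. Otherwise the complement is nonzero, some nonzero \<open>X\<close> satisfies
  \<open>X Y = D\<^sup>T X\<close>, and the block matrix with rows \<open>(H, X)\<close> and \<open>(0, G)\<close> yields a non-symmetric \<open>g\<close>.
\<close>

section \<open>Matrix--vector arithmetic\<close>

lemma zero_mult_vec [simp]: "v \<in> carrier_vec n \<Longrightarrow> 0\<^sub>m m n *\<^sub>v v = 0\<^sub>v m"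
  by (intro eq_vecI) auto

lemma mult_zero_vec [simp]: "A \<in> carrier_mat m n \<Longrightarrow> A *\<^sub>v 0\<^sub>v n = 0\<^sub>v m"
  by (intro eq_vecI) auto

lemma index_mult_mat_vec_sum:
  assumes "A \<in> carrier_mat m n" "w \<in> carrier_vec n" "i < m"
  shows "(A *\<^sub>v w) $ i = (\<Sum>j<n. A $$ (i,j) * w $ j)"
  using assms by (auto simp: scalar_prod_def lessThan_atLeast0 intro!: sum.cong)

lemma index_mult_mat_sum:
  assumes "X \<in> carrier_mat a b" "Y \<in> carrier_mat b c" "i < a" "j < c"
  shows "(X * Y) $$ (i,j) = (\<Sum>k<b. X $$ (i,k) * Y $$ (k,j))"
  using assms by (auto simp: scalar_prod_def lessThan_atLeast0 intro!: sum.cong)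

lemma mult_unit_vec_index:
  fixes M :: "'a :: semiring_1 mat"
  assumes M: "M \<in> carrier_mat r c" and i: "i < r" and j: "j < c"
  shows "(M *\<^sub>v unit_vec c j) $ i = M $$ (i,j)"
proof -
  have "(M *\<^sub>v unit_vec c j) $ i = (\<Sum>k<c. M $$ (i,k) * unit_vec c j $ k)"
    by (rule index_mult_mat_vec_sum[OF M _ i]) simp
  also have "\<dots> = (\<Sum>k<c. if k = j then M $$ (i,j) else 0)"
    by (intro sum.cong refl) (auto simp: unit_vec_def)
  also have "\<dots> = M $$ (i,j)" using j by simp
  finally show ?thesis .
qed

lemma mat_eq_by_mult_vec:
  fixes M :: "'a :: semiring_1 mat"
  assumes M: "M \<in> carrier_mat r c" and M': "M' \<in> carrier_mat r c"
    and eq: "\<And>x. x \<in> carrier_vec c \<Longrightarrow> M *\<^sub>v x = M' *\<^sub>v x"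
  shows "M = M'"
proof (rule eq_matI)
  fix i j assume "i < dim_row M'" "j < dim_col M'"
  hence i: "i < r" and j: "j < c" using M' by auto
  show "M $$ (i,j) = M' $$ (i,j)"
    using mult_unit_vec_index[OF M i j] mult_unit_vec_index[OF M' i j] eq[of "unit_vec c j"] by simp
qed (use M M' in auto)

lemma pow_mat_mult_vec_carrier [simp]:
  "A \<in> carrier_mat n n \<Longrightarrow> A ^\<^sub>m k *\<^sub>v v \<in> carrier_vec n"
  by (intro carrier_vecI) auto

lemma pow_mat_add:
  assumes A: "A \<in> carrier_mat n n"
  shows "A ^\<^sub>m (j + k) = A ^\<^sub>m j * A ^\<^sub>m k"
  by (induct k) (use A in \<open>auto simp: assoc_mult_mat[of _ n n _ n _ n]\<close>)

lemma pow_mat_add_mult_vec: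
  assumes A: "A \<in> carrier_mat n n" and v: "v \<in> carrier_vec n"
  shows "A ^\<^sub>m j *\<^sub>v (A ^\<^sub>m k *\<^sub>v v) = A ^\<^sub>m (j + k) *\<^sub>v v"
  using A v by (simp add: pow_mat_add[OF A] assoc_mult_mat_vec[of _ n n _ n])

lemma pow_mat_Suc_mult_vec':
  assumes A: "A \<in> carrier_mat n n" and v: "v \<in> carrier_vec n"
  shows "A ^\<^sub>m Suc k *\<^sub>v v = A ^\<^sub>m k *\<^sub>v (A *\<^sub>v v)"
  using A v by (simp add: assoc_mult_mat_vec[of _ n n _ n])

lemma pow_mat_Suc_mult_vec:
  assumes A: "A \<in> carrier_mat n n" and v: "v \<in> carrier_vec n"
  shows "A ^\<^sub>m Suc k *\<^sub>v v = A *\<^sub>v (A ^\<^sub>m k *\<^sub>v v)"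
  using pow_mat_add_mult_vec[OF A v, of 1 k] A by simp

section \<open>Polynomials evaluated at a matrix\<close>

lemma poly_mat_0 [simp]: "poly_mat 0 A = 0\<^sub>m (dim_row A) (dim_row A)"
  by (simp add: poly_mat_def)

lemma poly_mat_pCons:
  assumes A: "A \<in> carrier_mat n n"
  shows "poly_mat (pCons c p) A = c \<cdot>\<^sub>m 1\<^sub>m n + A * poly_mat p A"
proof (cases "p = 0 \<and> c = 0")
  case True
  then show ?thesis using A by auto
next
  case False
  hence "coeffs (pCons c p) = c # coeffs p" by (auto simp: cCons_def)
  then show ?thesis using A by (simp add: poly_mat_def fold_coeffs_def)
qed

lemma poly_mat_carrier [simp]:
  assumes A: "A \<in> carrier_mat n n"
  shows "poly_mat p A \<in> carrier_mat n n"
  by (induct p rule: pCons_induct) (use A in \<open>auto simp: poly_mat_pCons[OF A]\<close>)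

lemma poly_mat_mult_vec_carrier [simp]:
  assumes "A \<in> carrier_mat n n"
  shows "poly_mat p A *\<^sub>v v \<in> carrier_vec n"
  using poly_mat_carrier[OF assms, of p] by (intro carrier_vecI) simp

lemma poly_mat_pCons_mult_vec:
  assumes A: "A \<in> carrier_mat n n" and v: "v \<in> carrier_vec n"
  shows "poly_mat (pCons c p) A *\<^sub>v v = c \<cdot>\<^sub>v v + A *\<^sub>v (poly_mat p A *\<^sub>v v)"
proof -
  have "(c \<cdot>\<^sub>m 1\<^sub>m n) *\<^sub>v v = c \<cdot>\<^sub>v v"
    using v by (intro eq_vecI) (auto simp: smult_scalar_prod_distrib[of _ n])
  thus ?thesis
    unfolding poly_mat_pCons[OF A] using A v
    by (simp add: add_mult_distrib_mat_vec[of _ n n] assoc_mult_mat_vec[of _ n n _ n])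
qed

lemma poly_mat_add_mult_vec:
  assumes A: "A \<in> carrier_mat n n" and v: "v \<in> carrier_vec n"
  shows "poly_mat (p + q) A *\<^sub>v v = poly_mat p A *\<^sub>v v + poly_mat q A *\<^sub>v v"
proof (induct p arbitrary: q rule: pCons_induct)
  case 0
  then show ?case using A v by simp
next
  case (pCons a p)
  obtain b q' where q: "q = pCons b q'" by (cases q)
  show ?case
    unfolding q add_pCons poly_mat_pCons_mult_vec[OF A v] pCons(2) using A v
    by (intro eq_vecI) (auto simp: mult_add_distrib_mat_vec[of _ n n] algebra_simps)
qed

lemma poly_mat_smult_mult_vec:
  assumes A: "A \<in> carrier_mat n n" and v: "v \<in> carrier_vec n"
  shows "poly_mat (Polynomial.smult c p) A *\<^sub>v v = c \<cdot>\<^sub>v (poly_mat p A *\<^sub>v v)"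
proof (induct p rule: pCons_induct)
  case 0
  then show ?case using A v by (intro eq_vecI) auto
next
  case (pCons a p)
  show ?case
    unfolding Polynomial.smult_pCons poly_mat_pCons_mult_vec[OF A v] pCons(2) using A v
    by (intro eq_vecI) (auto simp: mult_mat_vec[of _ n n] algebra_simps)
qed

lemma poly_mat_mult_mult_vec:
  assumes A: "A \<in> carrier_mat n n" and v: "v \<in> carrier_vec n"
  shows "poly_mat (p * q) A *\<^sub>v v = poly_mat p A *\<^sub>v (poly_mat q A *\<^sub>v v)"
proof (induct p rule: pCons_induct)
  case 0
  then show ?case using A v by simp
next
  case (pCons a p)
  have qv: "poly_mat q A *\<^sub>v v \<in> carrier_vec n" using A v by simp
  have "poly_mat (pCons a p * q) A *\<^sub>v v = poly_mat (Polynomial.smult a q + pCons 0 (p * q)) A *\<^sub>v v"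
    by simp
  also have "\<dots> = a \<cdot>\<^sub>v (poly_mat q A *\<^sub>v v) + A *\<^sub>v (poly_mat p A *\<^sub>v (poly_mat q A *\<^sub>v v))"
    unfolding poly_mat_add_mult_vec[OF A v] poly_mat_smult_mult_vec[OF A v]
      poly_mat_pCons_mult_vec[OF A v] pCons(2)
    using A v by (intro eq_vecI) auto
  also have "\<dots> = poly_mat (pCons a p) A *\<^sub>v (poly_mat q A *\<^sub>v v)"
    using poly_mat_pCons_mult_vec[OF A qv] by simp
  finally show ?case .
qed

lemma poly_mat_one_mult_vec:
  assumes A: "A \<in> carrier_mat n n" and v: "v \<in> carrier_vec n"
  shows "poly_mat 1 A *\<^sub>v v = v"
  using poly_mat_pCons_mult_vec[OF A v, of 1 0] A v by (simp add: one_pCons)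

lemma poly_mat_mult_vec_index:
  assumes A: "A \<in> carrier_mat n n" and v: "v \<in> carrier_vec n" and i: "i < n"
    and deg: "\<And>k. k \<ge> N \<Longrightarrow> coeff f k = 0"
  shows "(poly_mat f A *\<^sub>v v) $ i = (\<Sum>k<N. coeff f k * (A ^\<^sub>m k *\<^sub>v v) $ i)"
  using deg i
proof (induct f arbitrary: N i rule: pCons_induct)
  case 0
  then show ?case using A v by simp
next
  case (pCons c f)
  show ?case
  proof (cases N)
    case 0
    with pCons have "pCons c f = 0" by (intro poly_eqI) auto
    with pCons(1) show ?thesis by simp
  next
    case (Suc N')
    have deg': "coeff f k = 0" if "k \<ge> N'" for k using pCons(3)[of "Suc k"] that Suc by auto
    have "(A *\<^sub>v (poly_mat f A *\<^sub>v v)) $ i = (\<Sum>j<n. A $$ (i,j) * (poly_mat f A *\<^sub>v v) $ j)"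
      using A pCons(4) by (intro index_mult_mat_vec_sum) auto
    also have "\<dots> = (\<Sum>k<N'. coeff f k * (\<Sum>j<n. A $$ (i,j) * (A ^\<^sub>m k *\<^sub>v v) $ j))"
      by (simp add: pCons(2)[OF deg'] sum_distrib_left sum_distrib_right sum.swap[of _ "{..<n}"]
          algebra_simps)
    also have "\<dots> = (\<Sum>k<N'. coeff f k * (A ^\<^sub>m Suc k *\<^sub>v v) $ i)"
      unfolding pow_mat_Suc_mult_vec[OF A v] using A pCons(4) v
      by (intro sum.cong refl arg_cong[of _ _ "\<lambda>x. _ * x"] index_mult_mat_vec_sum[symmetric]) auto
    finally show ?thesis
      unfolding Suc sum.lessThan_Suc_shift poly_mat_pCons_mult_vec[OF A v] using A v pCons(4) by simp
  qed
qed

section \<open>Injective matrices and column concatenation\<close>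

definition inj_mat :: "'a :: field mat \<Rightarrow> bool" where
  "inj_mat A \<longleftrightarrow> (\<forall>v \<in> carrier_vec (dim_col A). A *\<^sub>v v = 0\<^sub>v (dim_row A) \<longrightarrow> v = 0\<^sub>v (dim_col A))"

lemma inj_matD:
  "inj_mat M \<Longrightarrow> M \<in> carrier_mat r c \<Longrightarrow> x \<in> carrier_vec c \<Longrightarrow> M *\<^sub>v x = 0\<^sub>v r \<Longrightarrow> x = 0\<^sub>v c"
  unfolding inj_mat_def by auto

lemma inj_mat_iff_det:
  assumes "A \<in> carrier_mat n n"
  shows "inj_mat A \<longleftrightarrow> det A \<noteq> 0"
  using assms unfolding det_0_iff_vec_prod_zero[OF assms] inj_mat_def by auto

lemma inj_mat_inverse:
  assumes A: "A \<in> carrier_mat n n" and inj: "inj_mat A"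
  obtains B where "B \<in> carrier_mat n n" "A * B = 1\<^sub>m n" "B * A = 1\<^sub>m n"
  using det_non_zero_imp_unit[OF A inj[unfolded inj_mat_iff_det[OF A]], of "()"] that
  unfolding Units_def ring_mat_def by auto

lemma wide_mat_kernel:
  fixes A :: "'a :: field mat"
  assumes A: "A \<in> carrier_mat nr nc" and lt: "nr < nc"
  obtains c where "c \<in> carrier_vec nc" "c \<noteq> 0\<^sub>v nc" "A *\<^sub>v c = 0\<^sub>v nr"
proof -
  \<comment> \<open>Pad \<open>A\<close> with zero rows to a square matrix; its last row vanishes.\<close>
  define B where "B = mat\<^sub>r nc nc (\<lambda>i. if i = nc - 1 then 0\<^sub>v nc
    else vec nc (\<lambda>j. if i < nr then A $$ (i,j) else 0))"
  have B: "B \<in> carrier_mat nc nc" unfolding B_def by auto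
  have "det B = 0" unfolding B_def using lt by (intro det_row_0) auto
  then obtain c where c: "c \<in> carrier_vec nc" "c \<noteq> 0\<^sub>v nc" "B *\<^sub>v c = 0\<^sub>v nc"
    unfolding det_0_iff_vec_prod_zero[OF B] by auto
  have "A *\<^sub>v c = 0\<^sub>v nr"
  proof (intro eq_vecI)
    fix i assume "i < dim_vec (0\<^sub>v nr :: 'a vec)"
    hence i: "i < nr" by simp
    have "B $$ (i,j) = A $$ (i,j)" if "j < nc" for j using i lt that by (simp add: B_def)
    hence "(A *\<^sub>v c) $ i = (B *\<^sub>v c) $ i"
      using i lt by (simp add: index_mult_mat_vec_sum[OF A c(1) i] index_mult_mat_vec_sum[OF B c(1)])
    thus "(A *\<^sub>v c) $ i = 0\<^sub>v nr $ i" using c(3) i lt by simp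
  qed (use A in auto)
  with c that show ?thesis by blast
qed

lemma sum_lessThan_add:
  fixes d k :: nat
  shows "(\<Sum>j<d + k. f j) = (\<Sum>j<d. f j) + (\<Sum>j<k. f (d + j))"
  by (induct k) (auto simp: add.assoc)

definition hcat :: "'a mat \<Rightarrow> 'a mat \<Rightarrow> 'a mat" where
  "hcat K M = mat (dim_row K) (dim_col K + dim_col M)
     (\<lambda>(i,j). if j < dim_col K then K $$ (i,j) else M $$ (i, j - dim_col K))"

lemma dim_hcat [simp]:
  "dim_row (hcat K M) = dim_row K" "dim_col (hcat K M) = dim_col K + dim_col M"
  unfolding hcat_def by auto

lemma hcat_carrier [simp]:
  "K \<in> carrier_mat n d \<Longrightarrow> M \<in> carrier_mat n k \<Longrightarrow> hcat K M \<in> carrier_mat n (d + k)"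
  by auto

lemma col_hcat:
  assumes "K \<in> carrier_mat n d" "M \<in> carrier_mat n k"
  shows "j < d \<Longrightarrow> col (hcat K M) j = col K j"
    and "j < k \<Longrightarrow> col (hcat K M) (d + j) = col M j"
  using assms by (auto intro!: eq_vecI simp: hcat_def)

lemma hcat_mult_vec:
  assumes K: "K \<in> carrier_mat n d" and M: "M \<in> carrier_mat n k"
    and x: "x \<in> carrier_vec d" and y: "y \<in> carrier_vec k"
  shows "hcat K M *\<^sub>v (x @\<^sub>v y) = K *\<^sub>v x + M *\<^sub>v y"
proof (intro eq_vecI)
  fix i assume "i < dim_vec (K *\<^sub>v x + M *\<^sub>v y)"
  hence i: "i < n" using M by simp
  have "(hcat K M *\<^sub>v (x @\<^sub>v y)) $ i = (\<Sum>j<d+k. hcat K M $$ (i,j) * (x @\<^sub>v y) $ j)"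
    using x y by (intro index_mult_mat_vec_sum[OF hcat_carrier[OF K M] _ i]) auto
  also have "\<dots> = (\<Sum>j<d. K $$ (i,j) * x $ j) + (\<Sum>j<k. M $$ (i,j) * y $ j)"
    unfolding sum_lessThan_add using K M x y i by (auto simp: hcat_def intro!: sum.cong)
  also have "\<dots> = (K *\<^sub>v x + M *\<^sub>v y) $ i"
    using K M x y i by (simp add: index_mult_mat_vec_sum[OF K x i] index_mult_mat_vec_sum[OF M y i])
  finally show "(hcat K M *\<^sub>v (x @\<^sub>v y)) $ i = (K *\<^sub>v x + M *\<^sub>v y) $ i" .
qed (use K M in \<open>auto simp: hcat_def\<close>)

lemma hcat_assoc:
  "K \<in> carrier_mat n d \<Longrightarrow> U \<in> carrier_mat n e \<Longrightarrow> M \<in> carrier_mat n k \<Longrightarrow>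
    hcat (hcat K U) M = hcat K (hcat U M)"
  by (intro eq_matI) (auto simp: hcat_def)

lemma mult_hcat:
  assumes A: "A \<in> carrier_mat n n" and K: "K \<in> carrier_mat n d" and M: "M \<in> carrier_mat n k"
  shows "A * hcat K M = hcat (A * K) (A * M)"
proof (rule mat_col_eqI)
  fix j assume "j < dim_col (hcat (A * K) (A * M))"
  hence j: "j < d + k" using K M by simp
  have P: "hcat K M \<in> carrier_mat n (d + k)" using K M by simp
  have AK: "A * K \<in> carrier_mat n d" and AM: "A * M \<in> carrier_mat n k" using A K M by auto
  have "col (A * hcat K M) j = A *\<^sub>v col (hcat K M) j" by (rule col_mult2[OF A P j])
  also have "\<dots> = col (hcat (A * K) (A * M)) j"
  proof (cases "j < d")
    case True
    show ?thesis
      unfolding col_hcat(1)[OF K M True] col_hcat(1)[OF AK AM True] by (rule col_mult2[OF A K True, symmetric])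
  next
    case False
    then obtain j' where j': "j = d + j'" "j' < k" using j by (metis add_diff_inverse_nat nat_add_left_cancel_less)
    show ?thesis
      unfolding j' col_hcat(2)[OF K M j'(2)] col_hcat(2)[OF AK AM j'(2)]
      by (rule col_mult2[OF A M j'(2), symmetric])
  qed
  finally show "col (A * hcat K M) j = col (hcat (A * K) (A * M)) j" .
qed (use A K M in auto)

lemma hcat_mult_block_diag:
  assumes K: "K \<in> carrier_mat n d" and M: "M \<in> carrier_mat n k"
    and D: "D \<in> carrier_mat d d" and Y: "Y \<in> carrier_mat k k"
  shows "hcat K M * four_block_mat D (0\<^sub>m d k) (0\<^sub>m k d) Y = hcat (K * D) (M * Y)"
proof (rule mat_col_eqI)
  let ?B = "four_block_mat D (0\<^sub>m d k) (0\<^sub>m k d) Y"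
  fix j assume "j < dim_col (hcat (K * D) (M * Y))"
  hence j: "j < d + k" using K M D Y by simp
  have B: "?B \<in> carrier_mat (d + k) (d + k)" using D Y by auto
  have P: "hcat K M \<in> carrier_mat n (d + k)" using K M by simp
  have KD: "K * D \<in> carrier_mat n d" and MY: "M * Y \<in> carrier_mat n k" using K M D Y by auto
  have "col (hcat K M * ?B) j = hcat K M *\<^sub>v col ?B j" by (rule col_mult2[OF P B j])
  also have "\<dots> = col (hcat (K * D) (M * Y)) j"
  proof (cases "j < d")
    case True
    have "col ?B j = col D j @\<^sub>v 0\<^sub>v k" using D Y True by (intro eq_vecI) (auto simp: index_append_vec)
    moreover have "col D j \<in> carrier_vec d" using D by (intro carrier_vecI) simp
    ultimately have "hcat K M *\<^sub>v col ?B j = K *\<^sub>v col D j"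
      using hcat_mult_vec[OF K M, of "col D j" "0\<^sub>v k"] K M by simp
    thus ?thesis unfolding col_hcat(1)[OF KD MY True] col_mult2[OF K D True] .
  next
    case False
    then obtain j' where j': "j = d + j'" "j' < k" using j by (metis add_diff_inverse_nat nat_add_left_cancel_less)
    have "col ?B j = 0\<^sub>v d @\<^sub>v col Y j'" using D Y j' by (intro eq_vecI) (auto simp: index_append_vec)
    moreover have "col Y j' \<in> carrier_vec k" using Y by (intro carrier_vecI) simp
    ultimately have "hcat K M *\<^sub>v col ?B j = M *\<^sub>v col Y j'"
      using hcat_mult_vec[OF K M, of "0\<^sub>v d" "col Y j'"] K M by simp
    thus ?thesis unfolding j' col_hcat(2)[OF KD MY j'(2)] col_mult2[OF M Y j'(2)] .
  qed
  finally show "col (hcat K M * ?B) j = col (hcat (K * D) (M * Y)) j" .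
qed (use K M D Y in auto)

lemma inj_mat_hcat_shear:
  fixes K :: "'a :: field mat"
  assumes K: "K \<in> carrier_mat n d" and M: "M \<in> carrier_mat n k" and Z: "Z \<in> carrier_mat d k"
    and inj: "inj_mat (hcat K M)"
  shows "inj_mat (hcat K (M - K * Z))"
  unfolding inj_mat_def
proof (intro ballI impI)
  let ?N = "M - K * Z"
  have N: "?N \<in> carrier_mat n k" using K Z by (intro minus_carrier_mat) simp
  fix c assume "c \<in> carrier_vec (dim_col (hcat K ?N))"
    and c0: "hcat K ?N *\<^sub>v c = 0\<^sub>v (dim_row (hcat K ?N))"
  hence c: "c \<in> carrier_vec (d + k)" using K Z by simp
  define x where "x = vec_first c d"
  define y where "y = vec_last c k"
  have x: "x \<in> carrier_vec d" and y: "y \<in> carrier_vec k" unfolding x_def y_def by auto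
  have cxy: "c = x @\<^sub>v y" unfolding x_def y_def using c by simp
  have Zy: "Z *\<^sub>v y \<in> carrier_vec d" using Z y by simp
  have "hcat K M *\<^sub>v ((x - Z *\<^sub>v y) @\<^sub>v y) = K *\<^sub>v x - K *\<^sub>v (Z *\<^sub>v y) + M *\<^sub>v y"
    using hcat_mult_vec[OF K M _ y, of "x - Z *\<^sub>v y"] mult_minus_distrib_mat_vec[OF K x Zy] x Zy by simp
  also have "\<dots> = K *\<^sub>v x + ?N *\<^sub>v y"
    using minus_mult_distrib_mat_vec[OF M _ y, of "K * Z"] assoc_mult_mat_vec[OF K Z y] K M Z x y
    by (intro eq_vecI) auto
  also have "\<dots> = hcat K ?N *\<^sub>v (x @\<^sub>v y)" by (rule hcat_mult_vec[OF K N x y, symmetric])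
  also have "\<dots> = 0\<^sub>v n" using c0 K N unfolding cxy by simp
  finally have z: "(x - Z *\<^sub>v y) @\<^sub>v y = 0\<^sub>v (d + k)"
    using inj_matD[OF inj hcat_carrier[OF K M]] x y Z by simp
  have "y $ i = ((x - Z *\<^sub>v y) @\<^sub>v y) $ (d + i)" if "i < k" for i using that x y Z by simp
  hence y0: "y = 0\<^sub>v k" unfolding z using y by (intro eq_vecI) auto
  have "x $ i = ((x - Z *\<^sub>v y) @\<^sub>v y) $ i" if "i < d" for i using that x y0 Z by simp
  hence x0: "x = 0\<^sub>v d" unfolding z using x by (intro eq_vecI) auto
  show "c = 0\<^sub>v (dim_col (hcat K ?N))" unfolding cxy x0 y0 using K N by (intro eq_vecI) auto
qed

lemma inj_mat_hcat_unit_vec: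
  assumes K: "K \<in> carrier_mat n d" and inj: "inj_mat K" and lt: "d < n"
  obtains U where "U \<in> carrier_mat n 1" "inj_mat (hcat K U)"
proof -
  \<comment> \<open>A vector \<open>w \<noteq> 0\<close> orthogonal to the columns of \<open>K\<close>; any unit vector not orthogonal
    to \<open>w\<close> is outside the column space of \<open>K\<close>.\<close>
  obtain w where w: "w \<in> carrier_vec n" "w \<noteq> 0\<^sub>v n" "K\<^sup>T *\<^sub>v w = 0\<^sub>v d"
    using wide_mat_kernel[of "K\<^sup>T" d n] K lt by auto
  obtain i where i: "i < n" "w $ i \<noteq> 0"
    using w(1,2) by (metis eq_vecI carrier_vecD index_zero_vec)
  define U where "U = mat n 1 (\<lambda>(r,_). if r = i then 1 else (0::'a))"
  have U: "U \<in> carrier_mat n 1" unfolding U_def by auto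
  have "inj_mat (hcat K U)" unfolding inj_mat_def
  proof (intro ballI impI)
    fix c assume "c \<in> carrier_vec (dim_col (hcat K U))"
      and Kc: "hcat K U *\<^sub>v c = 0\<^sub>v (dim_row (hcat K U))"
    have dims: "dim_row (hcat K U) = n" "dim_col (hcat K U) = d + 1"
      using K U by (simp_all add: hcat_def)
    hence c: "c \<in> carrier_vec (d + 1)" using \<open>c \<in> _\<close> by simp
    define x where "x = vec_first c d"
    define y where "y = vec_last c 1"
    have cxy: "c = x @\<^sub>v y" unfolding x_def y_def using c by simp
    have x: "x \<in> carrier_vec d" and y: "y \<in> carrier_vec 1" unfolding x_def y_def by auto
    have eq: "K *\<^sub>v x + U *\<^sub>v y = 0\<^sub>v n"
      using Kc unfolding cxy hcat_mult_vec[OF K U x y] dims .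
    have "U *\<^sub>v y = vec n (\<lambda>r. if r = i then y $ 0 else 0)"
      using y by (intro eq_vecI) (auto simp: U_def scalar_prod_def)
    hence "w \<bullet> (U *\<^sub>v y) = w $ i * y $ 0"
      using w(1) i unfolding scalar_prod_def
      by (auto simp: if_distrib[of "\<lambda>x. _ * x"] cong: if_cong)
    moreover have "w \<bullet> (K *\<^sub>v x + U *\<^sub>v y) = w \<bullet> (U *\<^sub>v y)"
      using scalar_prod_add_distrib[OF w(1), of "K *\<^sub>v x" "U *\<^sub>v y"] K U x y
        transpose_vec_mult_scalar[OF K x w(1)] w(3) by simp
    ultimately have "y $ 0 = 0" using eq w(1) i by simp
    hence y0: "y = 0\<^sub>v 1" using y by (intro eq_vecI) auto
    hence "x = 0\<^sub>v d" using eq inj K U x y by (auto intro: inj_matD)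
    thus "c = 0\<^sub>v (dim_col (hcat K U))" unfolding cxy y0 dims by (intro eq_vecI) auto
  qed
  with U that show ?thesis by blast
qed

lemma inj_mat_extend:
  assumes "K \<in> carrier_mat n d" "inj_mat K" "d \<le> n"
  shows "\<exists>M \<in> carrier_mat n (n - d). inj_mat (hcat K M)"
  using assms
proof (induct "n - d" arbitrary: K d)
  case 0
  have "hcat K (0\<^sub>m n 0) = K" using 0 by (intro eq_matI) (auto simp: hcat_def)
  then show ?case using 0 by (intro bexI[of _ "0\<^sub>m n 0"]) auto
next
  case (Suc k d K)
  have lt: "d < n" using Suc(2) by simp
  obtain U where U: "U \<in> carrier_mat n 1" and inj: "inj_mat (hcat K U)"
    using inj_mat_hcat_unit_vec[OF Suc(3,4) lt] .
  have "\<exists>M \<in> carrier_mat n (n - (d + 1)). inj_mat (hcat (hcat K U) M)"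
    using Suc(1)[of "d + 1" "hcat K U"] Suc(2) hcat_carrier[OF Suc(3) U] inj lt by simp
  then obtain M where M: "M \<in> carrier_mat n (n - (d + 1))" and "inj_mat (hcat (hcat K U) M)"
    by blast
  moreover have "hcat U M \<in> carrier_mat n (n - d)"
    using hcat_carrier[OF U M] lt by (simp add: Suc_diff_Suc)
  ultimately show ?case using hcat_assoc[OF Suc(3) U M] by metis
qed

lemma hankel_triangular_inj:
  assumes H: "H \<in> carrier_mat d d"
    and Hh: "\<And>i j. i < d \<Longrightarrow> j < d \<Longrightarrow> H $$ (i,j) = h (i + j)"
    and h: "\<And>k. k < d \<Longrightarrow> h k = (if k = d - 1 then 1 else 0)"
  shows "inj_mat H"
  unfolding inj_mat_def
proof (intro ballI impI)
  fix c assume "c \<in> carrier_vec (dim_col H)" and Hc: "H *\<^sub>v c = 0\<^sub>v (dim_row H)"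
  hence c: "c \<in> carrier_vec d" using H by simp
  \<comment> \<open>Row \<open>t\<close> of \<open>H\<close> vanishes left of column \<open>d - 1 - t\<close> and is \<open>1\<close> there, so \<open>H c = 0\<close>
    forces \<open>c\<close> to vanish from the top index downwards.\<close>
  have vanish: "c $ (d - 1 - t) = 0" if "t < d" for t
    using that
  proof (induct t rule: less_induct)
    case (less t)
    have "0 = (\<Sum>j<d. H $$ (t,j) * c $ j)"
      using Hc H c less(2) index_mult_mat_vec_sum[OF H c less(2)] by simp
    also have "\<dots> = (\<Sum>j<d. if j = d - 1 - t then c $ (d - 1 - t) else 0)"
    proof (intro sum.cong refl)
      fix j assume j: "j \<in> {..<d}"
      show "H $$ (t,j) * c $ j = (if j = d - 1 - t then c $ (d - 1 - t) else 0)"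
      proof (cases "j \<le> d - 1 - t")
        case True
        thus ?thesis using Hh[of t j] h[of "t + j"] j less(2) by auto
      next
        case False
        hence "d - 1 - j < t" using j less(2) by auto
        thus ?thesis using less(1)[of "d - 1 - j"] j False by auto
      qed
    qed
    also have "\<dots> = c $ (d - 1 - t)" using less(2) by simp
    finally show ?case by simp
  qed
  have "c $ i = 0" if "i < d" for i
    using vanish[of "d - 1 - i"] that by (simp add: Suc_diff_Suc)
  thus "c = 0\<^sub>v (dim_col H)" using c H by (intro eq_vecI) auto
qed

lemma hcat_inj_decompose:
  assumes K: "K \<in> carrier_mat n d" and N: "N \<in> carrier_mat n k" and dk: "d + k = n"
    and inj: "inj_mat (hcat K N)" and u: "u \<in> carrier_vec n"
  shows "\<exists>x \<in> carrier_vec d. \<exists>y \<in> carrier_vec k. u = K *\<^sub>v x + N *\<^sub>v y"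
proof -
  have P: "hcat K N \<in> carrier_mat n n" using K N dk by auto
  obtain Q where Q: "Q \<in> carrier_mat n n" "hcat K N * Q = 1\<^sub>m n"
    using inj_mat_inverse[OF P inj] by blast
  define w where "w = Q *\<^sub>v u"
  have w: "w \<in> carrier_vec (d + k)" unfolding w_def using Q u dk by simp
  have "u = hcat K N *\<^sub>v w" unfolding w_def using P Q u by (simp add: assoc_mult_mat_vec[symmetric])
  also have "\<dots> = K *\<^sub>v vec_first w d + N *\<^sub>v vec_last w k"
    using hcat_mult_vec[OF K N, of "vec_first w d" "vec_last w k"] vec_first_last_append[OF w] by simp
  finally show ?thesis using vec_first_carrier vec_last_carrier by blast
qed

section \<open>Coprime factors of polynomials\<close>

lemma poly_ideal_monic_generator:
  fixes I :: "'a :: field poly set"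
  assumes f0: "f0 \<in> I" "f0 \<noteq> 0"
    and add: "\<And>f g. f \<in> I \<Longrightarrow> g \<in> I \<Longrightarrow> f + g \<in> I"
    and mult: "\<And>f g. f \<in> I \<Longrightarrow> g * f \<in> I"
  shows "\<exists>p. monic p \<and> (\<forall>f. f \<in> I \<longleftrightarrow> p dvd f)"
proof -
  obtain f where f: "f \<in> I" "f \<noteq> 0" and min: "\<And>g. g \<in> I \<Longrightarrow> g \<noteq> 0 \<Longrightarrow> degree f \<le> degree g"
    using ex_has_least_nat[of "\<lambda>f. f \<in> I \<and> f \<noteq> 0" f0 degree] f0 by blast
  define p where "p = [:inverse (lead_coeff f):] * f"
  have pI: "p \<in> I" unfolding p_def using mult[OF f(1)] .
  have mon: "monic p" and dp: "degree p = degree f"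
    unfolding p_def using f by (simp_all add: lead_coeff_mult degree_mult_eq)
  have "p dvd g" if g: "g \<in> I" for g
  proof -
    have "g mod p = g + [:-1:] * ((g div p) * p)"
      by (simp add: mod_div_mult_eq[symmetric] algebra_simps)
    moreover have "g + [:-1:] * ((g div p) * p) \<in> I"
      using add[OF g mult[OF mult[OF pI, of "g div p"], of "[:-1:]"]] .
    ultimately have "g mod p \<in> I" by simp
    moreover have "p \<noteq> 0" using mon by auto
    ultimately have "g mod p = 0"
      using min[of "g mod p"] degree_mod_less'[of p g] dp by linarith
    thus "p dvd g" by (simp add: mod_eq_0_iff_dvd)
  qed
  moreover have "g \<in> I" if "p dvd g" for g
  proof -
    from that obtain k where "g = p * k" by (rule dvdE)
    thus ?thesis using mult[OF pI, of k] by (simp add: mult.commute)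
  qed
  ultimately show ?thesis using mon by blast
qed

text \<open>Polynomials over a general field are not an instance of the library's gcd classes,
  so coprimality is expressed by a Bezout identity.\<close>

definition bezout_coprime :: "'a :: field poly \<Rightarrow> 'a poly \<Rightarrow> bool" where
  "bezout_coprime a b \<longleftrightarrow> (\<exists>x y. x * a + y * b = 1)"

lemma bezout_coprime_sym: "bezout_coprime a b \<Longrightarrow> bezout_coprime b a"
  unfolding bezout_coprime_def by (metis add.commute)

lemma bezout_coprime_mult_left:
  assumes "bezout_coprime a c" "bezout_coprime b c"
  shows "bezout_coprime (a * b) c"
proof -
  obtain x y u w where "x * a + y * c = 1" "u * b + w * c = 1"
    using assms unfolding bezout_coprime_def by auto
  hence "(x * a + y * c) * (u * b + w * c) = 1" by simp
  hence "(x * u) * (a * b) + (x * a * w + y * u * b + y * w * c) * c = 1"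
    by (simp add: algebra_simps)
  thus ?thesis unfolding bezout_coprime_def by blast
qed

lemma bezout_coprime_power: "bezout_coprime a c \<Longrightarrow> bezout_coprime (a ^ e) c"
proof (induct e)
  case 0
  show ?case unfolding bezout_coprime_def by (intro exI[of _ 1] exI[of _ 0]) simp
qed (simp add: bezout_coprime_mult_left)

lemma bezout_coprime_dvd_mult:
  assumes "bezout_coprime a b" "a dvd b * h"
  shows "a dvd h"
proof -
  obtain x y where xy: "x * a + y * b = 1" using assms(1) unfolding bezout_coprime_def by auto
  have "h = x * a * h + y * (b * h)" using arg_cong[OF xy, of "\<lambda>t. t * h"] by (simp add: algebra_simps)
  moreover have "a dvd x * a * h + y * (b * h)" using assms(2) by (simp add: dvd_add)
  ultimately show ?thesis by simp
qed

lemma bezout_coprime_mult_dvd: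
  assumes "bezout_coprime a b" "a dvd h" "b dvd h"
  shows "a * b dvd h"
proof -
  obtain x y where xy: "x * a + y * b = 1" using assms(1) unfolding bezout_coprime_def by auto
  have "h = x * (a * h) + y * (b * h)" using arg_cong[OF xy, of "\<lambda>t. t * h"] by (simp add: algebra_simps)
  moreover have "a * b dvd a * h" "a * b dvd b * h"
    using assms(2,3) by (simp_all add: mult.commute[of a b])
  hence "a * b dvd x * (a * h) + y * (b * h)" by (simp add: dvd_add dvd_mult)
  ultimately show ?thesis by simp
qed

lemma irreducible_bezout_coprime:
  fixes p :: "'a :: field poly"
  assumes p: "irreducible\<^sub>d p" and "\<not> p dvd s"
  shows "bezout_coprime p s"
proof -
  let ?I = "{x * p + y * s | x y. True}"
  have pI: "p \<in> ?I" by (intro CollectI exI[of _ 1] exI[of _ 0]) simp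
  have sI: "s \<in> ?I" by (intro CollectI exI[of _ 0] exI[of _ 1]) simp
  have add: "f + g \<in> ?I" if "f \<in> ?I" "g \<in> ?I" for f g
  proof -
    from that obtain x y x' y' where "f = x * p + y * s" "g = x' * p + y' * s" by auto
    hence "f + g = (x + x') * p + (y + y') * s" by (simp add: algebra_simps)
    thus ?thesis by blast
  qed
  have mult: "g * f \<in> ?I" if "f \<in> ?I" for f g
  proof -
    from that obtain x y where "f = x * p + y * s" by auto
    hence "g * f = (g * x) * p + (g * y) * s" by (simp add: algebra_simps)
    thus ?thesis by blast
  qed
  have "p \<noteq> 0" using p by auto
  obtain d where d: "monic d" "\<And>f. f \<in> ?I \<longleftrightarrow> d dvd f"
    using poly_ideal_monic_generator[OF pI \<open>p \<noteq> 0\<close> add mult] by blast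
  have "d \<in> ?I" using d(2)[of d] by simp
  show ?thesis
  proof (cases "degree d = 0")
    case True
    hence "d = 1" using d(1) monic_degree_0 by blast
    thus ?thesis using \<open>d \<in> ?I\<close> unfolding bezout_coprime_def by auto
  next
    case False
    moreover have "d dvd p" using d(2)[of p] pI by blast
    ultimately obtain c where "c \<noteq> 0" "p = Polynomial.smult c d"
      using irreducible\<^sub>d_dvd_smult[OF _ p, of d] by auto
    hence "p dvd d" by (simp add: smult_dvd_iff)
    hence "p dvd s" using d(2)[of s] sI dvd_trans by blast
    with assms(2) show ?thesis by contradiction
  qed
qed

lemma irreducible_power_decomp:
  fixes p :: "'a :: field poly"
  assumes p: "irreducible\<^sub>d p"
  shows "h \<noteq> 0 \<Longrightarrow> \<exists>j s. h = p ^ j * s \<and> \<not> p dvd s"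
proof (induct "degree h" arbitrary: h rule: less_induct)
  case less
  show ?case
  proof (cases "p dvd h")
    case True
    then obtain h' where h': "h = p * h'" by (rule dvdE)
    have "h' \<noteq> 0" "p \<noteq> 0" using less h' p by auto
    hence "degree h' < degree h" using h' p by (simp add: degree_mult_eq irreducible\<^sub>dD(1))
    from less(1)[OF this \<open>h' \<noteq> 0\<close>] obtain j s where "h' = p ^ j * s" "\<not> p dvd s" by blast
    thus ?thesis using h' by (intro exI[of _ "Suc j"] exI[of _ s]) (simp add: algebra_simps)
  next
    case False
    thus ?thesis by (intro exI[of _ 0] exI[of _ h]) simp
  qed
qed

lemma monic_irreducible_factor:
  fixes g :: "'a :: field poly"
  assumes "degree g \<noteq> 0"
  shows "\<exists>p. irreducible\<^sub>d p \<and> monic p \<and> p dvd g"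
proof -
  obtain q r where q: "irreducible\<^sub>d q" and g: "g = q * r"
    using irreducible\<^sub>d_factor[of g] assms by auto
  have "q \<noteq> 0" using q by auto
  define p where "p = Polynomial.smult (inverse (lead_coeff q)) q"
  have q_p: "q = Polynomial.smult (lead_coeff q) p" using \<open>q \<noteq> 0\<close> by (simp add: p_def)
  have "irreducible\<^sub>d p" using irreducible\<^sub>d_smultI[of "lead_coeff q" p] q q_p \<open>q \<noteq> 0\<close> by simp
  moreover have "monic p" using \<open>q \<noteq> 0\<close> by (simp add: p_def)
  moreover have "p dvd q" using q_p dvd_smult[OF dvd_refl[of p]] by metis
  ultimately show ?thesis using g by auto
qed

text \<open>Induction on \<open>deg g\<close>: write \<open>g = p\<^sup>e r\<close> and \<open>f = p\<^sup>j s\<close> for an irreducible factor \<open>p\<close> of \<open>g\<close>.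
  If \<open>j < e\<close>, the split \<open>f = s p\<^sup>j\<close>, \<open>g = p\<^sup>e r\<close> works; otherwise \<open>r\<close> does not divide \<open>f\<close>
  either and a split for \<open>r\<close> gives one for \<open>g\<close>.\<close>

lemma monic_not_dvd_split:
  fixes f g :: "'a :: field poly"
  assumes "monic f" "monic g" "\<not> g dvd f"
  shows "\<exists>f1 f2 g1 g2. monic f1 \<and> monic f2 \<and> monic g1 \<and> monic g2 \<and> f = f1 * f2 \<and> g = g1 * g2
     \<and> bezout_coprime f1 g1 \<and> degree f2 < degree g1"
  using assms
proof (induct "degree g" arbitrary: g rule: less_induct)
  case less
  note f = less(2) and g = less(3) and not_dvd = less(4)
  have "degree g \<noteq> 0"
  proof
    assume "degree g = 0"
    hence "g = 1" using g monic_degree_0 by blast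
    with not_dvd show False by simp
  qed
  then obtain p where p: "irreducible\<^sub>d p" "monic p" "p dvd g"
    using monic_irreducible_factor by blast
  have "g \<noteq> 0" "f \<noteq> 0" "p \<noteq> 0" using f g p(2) by auto
  obtain e r where gr: "g = p ^ e * r" and pr: "\<not> p dvd r"
    using irreducible_power_decomp[OF p(1) \<open>g \<noteq> 0\<close>] by blast
  obtain j s where fs: "f = p ^ j * s" and ps: "\<not> p dvd s"
    using irreducible_power_decomp[OF p(1) \<open>f \<noteq> 0\<close>] by blast
  have "e \<noteq> 0" using gr pr p(3) by (cases e) auto
  have "r \<noteq> 0" using gr \<open>g \<noteq> 0\<close> by auto
  have mr: "monic r" using g p(2) unfolding gr by (simp add: lead_coeff_mult lead_coeff_power)
  have ms: "monic s" using f p(2) unfolding fs by (simp add: lead_coeff_mult lead_coeff_power)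
  have deg_p: "degree p > 0" using p(1) by (rule irreducible\<^sub>dD(1))
  show ?case
  proof (cases "j < e")
    case True
    show ?thesis
    proof (rule exI[of _ s], rule exI[of _ "p ^ j"], rule exI[of _ "p ^ e"], rule exI[of _ r], intro conjI)
      show "monic s" "monic (p ^ j)" "monic (p ^ e)" "monic r"
        using ms mr p(2) by (auto simp: monic_power)
      show "f = s * p ^ j" "g = p ^ e * r" using fs gr by (auto simp: mult.commute)
      show "bezout_coprime s (p ^ e)"
        using irreducible_bezout_coprime[OF p(1) ps] by (rule bezout_coprime_sym[OF bezout_coprime_power])
      show "degree (p ^ j) < degree (p ^ e)" using True deg_p by (simp add: degree_power_eq \<open>p \<noteq> 0\<close>)
    qed
  next
    case False
    have r_not_dvd: "\<not> r dvd f"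
    proof
      assume "r dvd f"
      moreover have "bezout_coprime r (p ^ j)"
        using irreducible_bezout_coprime[OF p(1) pr] by (rule bezout_coprime_sym[OF bezout_coprime_power])
      ultimately have "r dvd s" using bezout_coprime_dvd_mult[of r "p ^ j" s] fs by simp
      moreover have "p ^ e dvd p ^ j" using False by (simp add: le_imp_power_dvd)
      ultimately have "g dvd f" unfolding gr fs by (simp add: mult_dvd_mono)
      with not_dvd show False by simp
    qed
    have "degree r < degree g"
      using \<open>e \<noteq> 0\<close> deg_p \<open>r \<noteq> 0\<close> \<open>p \<noteq> 0\<close> unfolding gr by (simp add: degree_mult_eq degree_power_eq)
    then obtain f1 f2 r1 r2 where IH: "monic f1" "monic f2" "monic r1" "monic r2"
      "f = f1 * f2" "r = r1 * r2" "bezout_coprime f1 r1" "degree f2 < degree r1"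
      using less(1)[OF _ f mr r_not_dvd] by blast
    show ?thesis
    proof (rule exI[of _ f1], rule exI[of _ f2], rule exI[of _ r1], rule exI[of _ "p ^ e * r2"],
        intro conjI)
      show "monic (p ^ e * r2)" using IH p(2) by (simp add: monic_power monic_mult)
      show "g = r1 * (p ^ e * r2)" using IH gr by (simp add: algebra_simps)
    qed (use IH in auto)
  qed
qed

section \<open>Local minimal polynomials\<close>

definition local_min_poly :: "'a :: field mat \<Rightarrow> 'a vec \<Rightarrow> 'a poly" where
  "local_min_poly A v = (SOME p. monic p \<and> (\<forall>f. poly_mat f A *\<^sub>v v = 0\<^sub>v (dim_row A) \<longleftrightarrow> p dvd f))"

definition krylov_mat :: "'a :: field mat \<Rightarrow> 'a vec \<Rightarrow> nat \<Rightarrow> 'a mat" where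
  "krylov_mat A v N = mat (dim_row A) N (\<lambda>(i,j). (A ^\<^sub>m j *\<^sub>v v) $ i)"

lemma dim_krylov_mat [simp]:
  "dim_row (krylov_mat A v N) = dim_row A" "dim_col (krylov_mat A v N) = N"
  unfolding krylov_mat_def by simp_all

lemma krylov_mat_carrier [simp]: "A \<in> carrier_mat n n \<Longrightarrow> krylov_mat A v N \<in> carrier_mat n N"
  by auto

lemma col_krylov_mat:
  "A \<in> carrier_mat n n \<Longrightarrow> j < N \<Longrightarrow> col (krylov_mat A v N) j = A ^\<^sub>m j *\<^sub>v v"
  by (intro eq_vecI) (auto simp: krylov_mat_def)

lemma coeff_sum_monom: "coeff (\<Sum>j<N. monom (c j) j) k = (if k < N then c k else 0)"
  by (simp add: coeff_sum coeff_monom)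

lemma krylov_mat_mult_vec:
  assumes A: "A \<in> carrier_mat n n" and v: "v \<in> carrier_vec n" and c: "c \<in> carrier_vec N"
  shows "krylov_mat A v N *\<^sub>v c = poly_mat (\<Sum>j<N. monom (c $ j) j) A *\<^sub>v v"
proof (intro eq_vecI)
  fix i assume "i < dim_vec (poly_mat (\<Sum>j<N. monom (c $ j) j) A *\<^sub>v v)"
  hence i: "i < n" using poly_mat_carrier[OF A, of "\<Sum>j<N. monom (c $ j) j"] by simp
  have "(krylov_mat A v N *\<^sub>v c) $ i = (\<Sum>j<N. krylov_mat A v N $$ (i,j) * c $ j)"
    by (rule index_mult_mat_vec_sum[OF krylov_mat_carrier[OF A] c i])
  also have "\<dots> = (\<Sum>k<N. coeff (\<Sum>j<N. monom (c $ j) j) k * (A ^\<^sub>m k *\<^sub>v v) $ i)"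
    using A i by (intro sum.cong refl) (auto simp: krylov_mat_def coeff_sum_monom)
  also have "\<dots> = (poly_mat (\<Sum>j<N. monom (c $ j) j) A *\<^sub>v v) $ i"
    by (rule poly_mat_mult_vec_index[OF A v i, symmetric]) (auto simp: coeff_sum_monom)
  finally show "(krylov_mat A v N *\<^sub>v c) $ i = (poly_mat (\<Sum>j<N. monom (c $ j) j) A *\<^sub>v v) $ i" .
qed (use carrier_matD(1)[OF poly_mat_carrier[OF A]] A in \<open>auto simp: krylov_mat_def\<close>)

lemma exists_annihilating_poly:
  assumes A: "A \<in> carrier_mat n n" and v: "v \<in> carrier_vec n"
  shows "\<exists>f. f \<noteq> 0 \<and> degree f \<le> n \<and> poly_mat f A *\<^sub>v v = 0\<^sub>v n"
proof -
  \<comment> \<open>The \<open>n + 1\<close> vectors \<open>A\<^sup>k v\<close>, \<open>k \<le> n\<close>, are linearly dependent.\<close>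
  obtain c where c: "c \<in> carrier_vec (n + 1)" "c \<noteq> 0\<^sub>v (n + 1)" "krylov_mat A v (n + 1) *\<^sub>v c = 0\<^sub>v n"
    using wide_mat_kernel[OF krylov_mat_carrier[OF A, of v "n + 1"]] by auto
  define f where "f = (\<Sum>j<n + 1. monom (c $ j) j)"
  have "f \<noteq> 0"
  proof
    assume "f = 0"
    hence "c $ k = 0" if "k < n + 1" for k
      using coeff_sum_monom[of "\<lambda>j. c $ j" "n + 1" k] that unfolding f_def by auto
    hence "c = 0\<^sub>v (n + 1)" using c(1) by (intro eq_vecI) auto
    with c(2) show False by simp
  qed
  moreover have "degree f \<le> n" unfolding f_def by (rule degree_le) (auto simp: coeff_sum_monom)
  moreover have "poly_mat f A *\<^sub>v v = 0\<^sub>v n"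
    using c(3) krylov_mat_mult_vec[OF A v c(1)] unfolding f_def by simp
  ultimately show ?thesis by blast
qed

lemma local_min_poly:
  assumes A: "A \<in> carrier_mat n n" and v: "v \<in> carrier_vec n"
  shows local_min_poly_monic: "monic (local_min_poly A v)"
    and local_min_poly_dvd_iff: "poly_mat f A *\<^sub>v v = 0\<^sub>v n \<longleftrightarrow> local_min_poly A v dvd f"
proof -
  let ?I = "{f. poly_mat f A *\<^sub>v v = 0\<^sub>v n}"
  obtain F where "F \<in> ?I" "F \<noteq> 0"
    using exists_annihilating_poly[OF A v] by auto
  moreover have "f + g \<in> ?I" if "f \<in> ?I" "g \<in> ?I" for f g
    using that poly_mat_add_mult_vec[OF A v, of f g] by simp
  moreover have "g * f \<in> ?I" if "f \<in> ?I" for f g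
    using that poly_mat_mult_mult_vec[OF A v, of g f] mult_zero_vec[OF poly_mat_carrier[OF A]] by simp
  ultimately have "\<exists>p. monic p \<and> (\<forall>f. f \<in> ?I \<longleftrightarrow> p dvd f)"
    by (rule poly_ideal_monic_generator)
  hence "\<exists>p. monic p \<and> (\<forall>f. poly_mat f A *\<^sub>v v = 0\<^sub>v (dim_row A) \<longleftrightarrow> p dvd f)"
    using A by simp
  from someI_ex[OF this] have "monic (local_min_poly A v)
    \<and> (\<forall>f. poly_mat f A *\<^sub>v v = 0\<^sub>v (dim_row A) \<longleftrightarrow> local_min_poly A v dvd f)"
    unfolding local_min_poly_def .
  thus "monic (local_min_poly A v)" "poly_mat f A *\<^sub>v v = 0\<^sub>v n \<longleftrightarrow> local_min_poly A v dvd f"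
    using A by auto
qed

lemma local_min_polyI:
  assumes A: "A \<in> carrier_mat n n" and v: "v \<in> carrier_vec n"
    and p: "monic p" and dvd_iff: "\<And>f. poly_mat f A *\<^sub>v v = 0\<^sub>v n \<longleftrightarrow> p dvd f"
  shows "local_min_poly A v = p"
proof (rule poly_dvd_antisym)
  show "local_min_poly A v dvd p"
    using dvd_iff[of p] local_min_poly_dvd_iff[OF A v, of p] by simp
  show "p dvd local_min_poly A v"
    using dvd_iff[of "local_min_poly A v"] local_min_poly_dvd_iff[OF A v, of "local_min_poly A v"]
    by simp
qed (use local_min_poly_monic[OF A v] p in simp)

lemma degree_local_min_poly_le:
  assumes A: "A \<in> carrier_mat n n" and v: "v \<in> carrier_vec n"
  shows "degree (local_min_poly A v) \<le> n"
proof -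
  obtain f where f: "f \<noteq> 0" "degree f \<le> n" "poly_mat f A *\<^sub>v v = 0\<^sub>v n"
    using exists_annihilating_poly[OF A v] by blast
  hence "local_min_poly A v dvd f" using local_min_poly_dvd_iff[OF A v] by simp
  thus ?thesis using dvd_imp_degree_le[OF _ f(1)] f(2) le_trans by blast
qed

lemma local_min_poly_poly_mat_mult_vec:
  assumes A: "A \<in> carrier_mat n n" and v: "v \<in> carrier_vec n"
    and qr: "local_min_poly A v = q * r" and q: "monic q" and r: "monic r"
  shows "local_min_poly A (poly_mat q A *\<^sub>v v) = r"
proof (rule local_min_polyI[OF A _ r])
  show "poly_mat q A *\<^sub>v v \<in> carrier_vec n" using A by simp
  fix f
  have "q \<noteq> 0" using q by auto
  have "poly_mat f A *\<^sub>v (poly_mat q A *\<^sub>v v) = poly_mat (q * f) A *\<^sub>v v"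
    using poly_mat_mult_mult_vec[OF A v, of f q] by (simp add: mult.commute)
  thus "poly_mat f A *\<^sub>v (poly_mat q A *\<^sub>v v) = 0\<^sub>v n \<longleftrightarrow> r dvd f"
    using local_min_poly_dvd_iff[OF A v] qr \<open>q \<noteq> 0\<close> by simp
qed

text \<open>If \<open>h(A)\<close> kills \<open>v + w\<close>, then \<open>g(A) h(A)\<close> kills \<open>v\<close> for the local minimal polynomial
  \<open>g\<close> of \<open>w\<close>, so the local minimal polynomial of \<open>v\<close> divides \<open>g h\<close>, hence \<open>h\<close>.\<close>

lemma local_min_poly_dvd_of_add:
  assumes A: "A \<in> carrier_mat n n" and v: "v \<in> carrier_vec n" and w: "w \<in> carrier_vec n"
    and coprime: "bezout_coprime (local_min_poly A v) (local_min_poly A w)"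
    and h: "poly_mat h A *\<^sub>v (v + w) = 0\<^sub>v n"
  shows "local_min_poly A v dvd h"
proof -
  let ?g = "local_min_poly A w"
  have hv: "poly_mat h A *\<^sub>v v \<in> carrier_vec n" and hw: "poly_mat h A *\<^sub>v w \<in> carrier_vec n"
    using A by simp_all
  have "poly_mat h A *\<^sub>v v + poly_mat h A *\<^sub>v w = 0\<^sub>v n"
    using h mult_add_distrib_mat_vec[OF poly_mat_carrier[OF A] v w] by simp
  hence "poly_mat ?g A *\<^sub>v (poly_mat h A *\<^sub>v v) + poly_mat ?g A *\<^sub>v (poly_mat h A *\<^sub>v w) = 0\<^sub>v n"
    using mult_add_distrib_mat_vec[OF poly_mat_carrier[OF A] hv hw, of ?g]
      mult_zero_vec[OF poly_mat_carrier[OF A]] by simp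
  moreover have "poly_mat ?g A *\<^sub>v (poly_mat h A *\<^sub>v w) = 0\<^sub>v n"
    using local_min_poly_dvd_iff[OF A w, of "?g * h"] poly_mat_mult_mult_vec[OF A w] by simp
  ultimately have "poly_mat (?g * h) A *\<^sub>v v = 0\<^sub>v n"
    using poly_mat_mult_mult_vec[OF A v] A by simp
  thus ?thesis using local_min_poly_dvd_iff[OF A v] coprime bezout_coprime_dvd_mult by blast
qed

lemma local_min_poly_add:
  assumes A: "A \<in> carrier_mat n n" and v: "v \<in> carrier_vec n" and w: "w \<in> carrier_vec n"
    and coprime: "bezout_coprime (local_min_poly A v) (local_min_poly A w)"
  shows "local_min_poly A (v + w) = local_min_poly A v * local_min_poly A w"
proof (rule local_min_polyI[OF A])
  show "v + w \<in> carrier_vec n" using v w by simp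
  show "monic (local_min_poly A v * local_min_poly A w)"
    using local_min_poly_monic[OF A v] local_min_poly_monic[OF A w] by (simp add: monic_mult)
  show "poly_mat h A *\<^sub>v (v + w) = 0\<^sub>v n \<longleftrightarrow> local_min_poly A v * local_min_poly A w dvd h" for h
  proof
    assume h: "poly_mat h A *\<^sub>v (v + w) = 0\<^sub>v n"
    moreover have "w + v = v + w" by (rule comm_add_vec[OF w v])
    ultimately have "local_min_poly A v dvd h" "local_min_poly A w dvd h"
      using local_min_poly_dvd_of_add[OF A v w coprime]
        local_min_poly_dvd_of_add[OF A w v bezout_coprime_sym[OF coprime]] by simp_all
    thus "local_min_poly A v * local_min_poly A w dvd h" by (rule bezout_coprime_mult_dvd[OF coprime])
  next
    assume "local_min_poly A v * local_min_poly A w dvd h"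
    hence "local_min_poly A v dvd h" "local_min_poly A w dvd h"
      using dvd_mult_left dvd_mult_right by auto
    hence "poly_mat h A *\<^sub>v v = 0\<^sub>v n" "poly_mat h A *\<^sub>v w = 0\<^sub>v n"
      using local_min_poly_dvd_iff[OF A v] local_min_poly_dvd_iff[OF A w] by simp_all
    thus "poly_mat h A *\<^sub>v (v + w) = 0\<^sub>v n"
      using mult_add_distrib_mat_vec[OF poly_mat_carrier[OF A] v w] by simp
  qed
qed

lemma exists_maximal_local_min_poly:
  assumes A: "A \<in> carrier_mat n n"
  shows "\<exists>v \<in> carrier_vec n. \<forall>w \<in> carrier_vec n. local_min_poly A w dvd local_min_poly A v"
proof -
  let ?S = "(\<lambda>v. degree (local_min_poly A v)) ` carrier_vec n"
  have "?S \<subseteq> {..n}" using degree_local_min_poly_le[OF A] by auto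
  hence fin: "finite ?S" by (rule finite_subset) simp
  have "?S \<noteq> {}" using zero_carrier_vec[of n] by blast
  from Max_in[OF fin this] obtain v where v: "v \<in> carrier_vec n"
    and max: "degree (local_min_poly A v) = Max ?S" by (metis (no_types, lifting) imageE)
  show ?thesis
  proof (intro bexI[OF _ v] ballI)
    fix w :: "'a vec" assume w: "w \<in> carrier_vec n"
    show "local_min_poly A w dvd local_min_poly A v"
    proof (rule ccontr)
      assume "\<not> ?thesis"
      then obtain f1 f2 g1 g2 where split: "monic f1" "monic f2" "monic g1" "monic g2"
        "local_min_poly A v = f1 * f2" "local_min_poly A w = g1 * g2"
        "bezout_coprime f1 g1" "degree f2 < degree g1"
        using monic_not_dvd_split[OF local_min_poly_monic[OF A v] local_min_poly_monic[OF A w]]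
        by blast
      \<comment> \<open>\<open>f\<^sub>2(A) v\<close> and \<open>g\<^sub>2(A) w\<close> have the coprime local minimal polynomials \<open>f\<^sub>1\<close> and \<open>g\<^sub>1\<close>,
        so their sum has local minimal polynomial \<open>f\<^sub>1 g\<^sub>1\<close>, of degree larger than that of \<open>v\<close>.\<close>
      define u where "u = poly_mat f2 A *\<^sub>v v + poly_mat g2 A *\<^sub>v w"
      have "local_min_poly A (poly_mat f2 A *\<^sub>v v) = f1"
        using split(1,2,5) by (intro local_min_poly_poly_mat_mult_vec[OF A v]) (simp_all add: mult.commute)
      moreover have "local_min_poly A (poly_mat g2 A *\<^sub>v w) = g1"
        using split(3,4,6) by (intro local_min_poly_poly_mat_mult_vec[OF A w]) (simp_all add: mult.commute)
      ultimately have "local_min_poly A u = f1 * g1"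
        unfolding u_def using split(7) A by (simp add: local_min_poly_add)
      moreover have "u \<in> carrier_vec n" unfolding u_def using A by simp
      hence "degree (local_min_poly A u) \<le> degree (local_min_poly A v)"
        unfolding max using fin by simp
      moreover have "f1 \<noteq> 0" "f2 \<noteq> 0" "g1 \<noteq> 0" using split(1-3) by auto
      ultimately show False using split by (simp add: degree_mult_eq)
    qed
  qed
qed

lemma min_poly_eq_local_min_poly:
  assumes A: "A \<in> carrier_mat n n" and v: "v \<in> carrier_vec n"
    and max: "\<And>w. w \<in> carrier_vec n \<Longrightarrow> local_min_poly A w dvd local_min_poly A v"
  shows "poly_mat f A = 0\<^sub>m n n \<longleftrightarrow> local_min_poly A v dvd f"
    and "min_poly A = local_min_poly A v"
proof -
  let ?m = "local_min_poly A v"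
  have iff: "poly_mat f A = 0\<^sub>m n n \<longleftrightarrow> ?m dvd f" for f
  proof
    assume "poly_mat f A = 0\<^sub>m n n"
    hence "poly_mat f A *\<^sub>v v = 0\<^sub>v n" using v by simp
    thus "?m dvd f" using local_min_poly_dvd_iff[OF A v] by simp
  next
    assume "?m dvd f"
    have "poly_mat f A *\<^sub>v w = 0\<^sub>v n" if w: "w \<in> carrier_vec n" for w
    proof -
      have "local_min_poly A w dvd f" using max[OF w] \<open>?m dvd f\<close> by (rule dvd_trans)
      thus ?thesis using local_min_poly_dvd_iff[OF A w] by simp
    qed
    thus "poly_mat f A = 0\<^sub>m n n"
      by (intro mat_eq_by_mult_vec[OF poly_mat_carrier[OF A]]) auto
  qed
  thus "poly_mat f A = 0\<^sub>m n n \<longleftrightarrow> ?m dvd f" .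
  show "min_poly A = ?m" unfolding min_poly_def
  proof (rule the_equality)
    show "monic ?m \<and> (\<forall>f. poly_mat f A = 0\<^sub>m (dim_row A) (dim_row A) \<longleftrightarrow> ?m dvd f)"
      using local_min_poly_monic[OF A v] iff A by simp
    fix p assume p: "monic p \<and> (\<forall>f. poly_mat f A = 0\<^sub>m (dim_row A) (dim_row A) \<longleftrightarrow> p dvd f)"
    hence p_iff: "poly_mat f A = 0\<^sub>m n n \<longleftrightarrow> p dvd f" for f using A by simp
    show "p = ?m"
    proof (rule poly_dvd_antisym)
      show "p dvd ?m" using p_iff[of ?m] iff[of ?m] by simp
      show "?m dvd p" using p_iff[of p] iff[of p] by simp
    qed (use p local_min_poly_monic[OF A v] in simp)
  qed
qed

lemma degree_local_min_poly_pos: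
  assumes A: "A \<in> carrier_mat n n" and v: "v \<in> carrier_vec n" and n: "n \<ge> 1"
    and max: "\<And>w. w \<in> carrier_vec n \<Longrightarrow> local_min_poly A w dvd local_min_poly A v"
  shows "degree (local_min_poly A v) \<ge> 1"
proof (rule ccontr)
  assume "\<not> ?thesis"
  hence "degree (local_min_poly A v) = 0" by simp
  hence "local_min_poly A v = 1" using local_min_poly_monic[OF A v] monic_degree_0 by blast
  hence "poly_mat 1 A = 0\<^sub>m n n" using min_poly_eq_local_min_poly(1)[OF A v max, of 1] by simp
  hence "unit_vec n 0 = (0\<^sub>v n :: 'a vec)"
    using poly_mat_one_mult_vec[OF A unit_vec_carrier[of n 0]] by simp
  hence "unit_vec n 0 $ 0 = (0\<^sub>v n :: 'a vec) $ 0" by simp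
  thus False using n by simp
qed

section \<open>Companion matrices\<close>

definition companion_mat :: "'a :: field poly \<Rightarrow> 'a mat" where
  "companion_mat m = mat (degree m) (degree m)
     (\<lambda>(i,j). if Suc j < degree m then (if i = Suc j then 1 else 0) else - coeff m i)"

lemma dim_companion_mat [simp]:
  "dim_row (companion_mat m) = degree m" "dim_col (companion_mat m) = degree m"
  unfolding companion_mat_def by simp_all

lemma companion_mat_carrier [simp]: "companion_mat m \<in> carrier_mat (degree m) (degree m)"
  by auto

lemma sum_companion_mat_col:
  assumes k: "k < degree m"
  shows "(\<Sum>j<degree m. companion_mat m $$ (j,k) * f j)
    = (if Suc k < degree m then f (Suc k) else - (\<Sum>j<degree m. coeff m j * f j))"
proof (cases "Suc k < degree m")
  case True
  hence "(\<Sum>j<degree m. companion_mat m $$ (j,k) * f j) = (\<Sum>j<degree m. if j = Suc k then f j else 0)"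
    using k by (intro sum.cong refl) (auto simp: companion_mat_def)
  thus ?thesis using True by simp
next
  case False
  hence "(\<Sum>j<degree m. companion_mat m $$ (j,k) * f j) = (\<Sum>j<degree m. - (coeff m j * f j))"
    using k by (intro sum.cong refl) (auto simp: companion_mat_def)
  thus ?thesis using False by (simp add: sum_negf)
qed

lemma char_poly_matrix_companion_mat_index:
  "i < degree m \<Longrightarrow> j < degree m \<Longrightarrow> char_poly_matrix (companion_mat m) $$ (i,j) =
    (if i = j then [:0,1:] else 0) + [:- (companion_mat m $$ (i,j)):]"
  unfolding char_poly_matrix_def companion_mat_def by simp

text \<open>Laplace expansion of \<open>det (X I - companion_mat m)\<close>, \<open>m = c + X q\<close>, along the first row: only the entries
  \<open>(0,0)\<close> and \<open>(0, deg q)\<close> are nonzero; the first minor is the characteristic matrix of the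
  companion matrix of \<open>q\<close>, the second one is upper triangular with diagonal \<open>-1\<close>.\<close>

lemma char_poly_matrix_companion_first_row:
  assumes "q \<noteq> 0" and "j \<le> degree q"
  shows "char_poly_matrix (companion_mat (pCons c q)) $$ (0,j)
    = (if j = 0 then [:0,1:] else 0) + (if j = degree q then [:c:] else 0)"
  using assms by (simp add: char_poly_matrix_companion_mat_index) (auto simp: companion_mat_def)

lemma minor_char_poly_matrix_companion_first:
  assumes q: "q \<noteq> 0"
  shows "mat_delete (char_poly_matrix (companion_mat (pCons c q))) 0 0
    = char_poly_matrix (companion_mat q)"
proof (rule eq_matI)
  fix i j assume "i < dim_row (char_poly_matrix (companion_mat q))"
    "j < dim_col (char_poly_matrix (companion_mat q))"
  hence i: "i < degree q" and j: "j < degree q" by (simp_all add: char_poly_matrix_def)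
  thus "mat_delete (char_poly_matrix (companion_mat (pCons c q))) 0 0 $$ (i,j)
    = char_poly_matrix (companion_mat q) $$ (i,j)"
    using q by (simp add: mat_delete_def char_poly_matrix_companion_mat_index char_poly_matrix_def)
      (simp add: companion_mat_def)
qed (use q in \<open>simp_all add: char_poly_matrix_def mat_delete_def\<close>)

lemma cofactor_char_poly_matrix_companion_last:
  assumes q: "q \<noteq> 0"
  shows "cofactor (char_poly_matrix (companion_mat (pCons c q))) 0 (degree q) = 1"
proof -
  let ?d = "degree q"
  define U where "U = mat_delete (char_poly_matrix (companion_mat (pCons c q))) 0 ?d"
  have U: "U \<in> carrier_mat ?d ?d" using q unfolding U_def by (simp add: char_poly_matrix_def mat_delete_def)
  have U_index: "U $$ (i,j) = (if j = Suc i then [:0,1:] else 0) + (if i = j then [:-1:] else 0)"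
    if "i < ?d" "j < ?d" for i j
    using that q unfolding U_def
    by (simp add: mat_delete_def char_poly_matrix_def char_poly_matrix_companion_mat_index)
      (auto simp: companion_mat_def)
  have "upper_triangular U" unfolding upper_triangular_def using U U_index by auto
  hence "det U = prod_list (diag_mat U)" by (rule det_upper_triangular[OF _ U])
  also have "diag_mat U = map (\<lambda>i. [:-1:]) [0..<?d]" unfolding diag_mat_def using U U_index by simp
  finally have "det U = [:-1:] ^ ?d" by (simp add: map_replicate_const prod_list_replicate)
  thus ?thesis
    unfolding cofactor_def U_def[symmetric]
    by (simp add: power_mult_distrib[symmetric] one_pCons[symmetric])
qed

lemma char_poly_companion_mat:
  fixes m :: "'a :: field poly"
  assumes "monic m"
  shows "char_poly (companion_mat m) = m"
  using assms
proof (induct "degree m" arbitrary: m)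
  case 0
  hence "degree m = 0" by simp
  hence "m = 1" using 0(2) monic_degree_0 by blast
  moreover have "char_poly_matrix (companion_mat m) = 1\<^sub>m 0"
    using \<open>degree m = 0\<close> by (intro eq_matI) (auto simp: char_poly_matrix_def companion_mat_def)
  ultimately show ?case by (simp add: char_poly_def)
next
  case (Suc d m)
  obtain c q where mq: "m = pCons c q" by (cases m)
  have "q \<noteq> 0" using Suc(2) mq by (metis degree_pCons_0 nat.distinct(1))
  hence dq: "degree q = d" and mon: "monic q" using Suc(2,3) mq by auto
  let ?C = "char_poly_matrix (companion_mat (pCons c q))"
  have C: "?C \<in> carrier_mat (Suc d) (Suc d)"
    using \<open>q \<noteq> 0\<close> dq by (intro carrier_matI) (simp_all add: char_poly_matrix_def)
  have "char_poly (companion_mat m) = (\<Sum>j<Suc d. ?C $$ (0,j) * cofactor ?C 0 j)"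
    unfolding char_poly_def mq by (rule laplace_expansion_row[OF C]) simp
  also have "\<dots> = (\<Sum>j<Suc d. (if j = 0 then [:0,1:] * cofactor ?C 0 j else 0)
      + (if j = d then [:c:] * cofactor ?C 0 j else 0))"
    using char_poly_matrix_companion_first_row[OF \<open>q \<noteq> 0\<close>] dq
    by (intro sum.cong refl) (simp add: distrib_right)
  also have "\<dots> = [:0,1:] * cofactor ?C 0 0 + [:c:] * cofactor ?C 0 d"
    by (simp add: sum.distrib)
  also have "cofactor ?C 0 0 = q"
    unfolding cofactor_def minor_char_poly_matrix_companion_first[OF \<open>q \<noteq> 0\<close>]
    using Suc(1)[OF dq[symmetric] mon] by (simp add: char_poly_def)
  also have "cofactor ?C 0 d = 1" using cofactor_char_poly_matrix_companion_last[OF \<open>q \<noteq> 0\<close>] dq by simp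
  finally show ?case unfolding mq by (simp add: pCons_0_as_mult[symmetric] add.commute)
qed

section \<open>Intertwiners of a matrix and its transpose\<close>

lemma congruence_intertwines:
  fixes A :: "'a :: field mat"
  assumes A: "A \<in> carrier_mat n n" and B: "B \<in> carrier_mat n n" and Q: "Q \<in> carrier_mat n n"
    and G: "G \<in> carrier_mat n n" and QA: "Q * A = B * Q" and GB: "G * B = transpose_mat B * G"
  shows "(transpose_mat Q * G * Q) * A = transpose_mat A * (transpose_mat Q * G * Q)"
proof -
  have QT: "transpose_mat Q \<in> carrier_mat n n" and BT: "transpose_mat B \<in> carrier_mat n n"
    and AT: "transpose_mat A \<in> carrier_mat n n" using Q B A by auto
  have "(transpose_mat Q * G * Q) * A = transpose_mat Q * (G * B) * Q"
    using A B Q G QT QA by (simp add: assoc_mult_mat[of _ n n _ n _ n])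
  also have "\<dots> = (transpose_mat Q * transpose_mat B) * (G * Q)"
    unfolding GB using Q G QT BT by (simp add: assoc_mult_mat[of _ n n _ n _ n])
  also have "transpose_mat Q * transpose_mat B = transpose_mat (B * Q)"
    using transpose_mult[OF B Q] by simp
  also have "\<dots> = transpose_mat A * transpose_mat Q"
    unfolding QA[symmetric] using transpose_mult[OF Q A] by simp
  also have "\<dots> * (G * Q) = transpose_mat A * (transpose_mat Q * G * Q)"
    using AT QT G Q by (simp add: assoc_mult_mat[of _ n n _ n _ n])
  finally show ?thesis .
qed

lemma congruence_symmetric_iff:
  fixes P :: "'a :: field mat"
  assumes P: "P \<in> carrier_mat n n" and Q: "Q \<in> carrier_mat n n" and QP: "Q * P = 1\<^sub>m n"
    and G: "G \<in> carrier_mat n n"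
  shows "transpose_mat (transpose_mat Q * G * Q) = transpose_mat Q * G * Q \<longleftrightarrow> transpose_mat G = G"
proof -
  have QT: "transpose_mat Q \<in> carrier_mat n n" using Q by simp
  have tr: "transpose_mat (transpose_mat Q * X * Q) = transpose_mat Q * transpose_mat X * Q"
    if X: "X \<in> carrier_mat n n" for X
  proof -
    have "transpose_mat (transpose_mat Q * X * Q) = transpose_mat Q * transpose_mat (transpose_mat Q * X)"
      using transpose_mult[OF mult_carrier_mat[OF QT X] Q] by simp
    also have "transpose_mat (transpose_mat Q * X) = transpose_mat X * Q"
      using transpose_mult[OF QT X] by simp
    finally show ?thesis using QT X Q by (simp add: assoc_mult_mat[of _ n n _ n _ n])
  qed
  have undo: "transpose_mat P * (transpose_mat Q * X * Q) * P = X" if X: "X \<in> carrier_mat n n" for X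
  proof -
    have PQ: "transpose_mat P * transpose_mat Q = 1\<^sub>m n"
      using arg_cong[OF QP, of transpose_mat] transpose_mult[OF Q P] by simp
    have "transpose_mat P * (transpose_mat Q * X * Q) * P = (transpose_mat P * transpose_mat Q) * X * (Q * P)"
      using P Q QT X by (simp add: assoc_mult_mat[of _ n n _ n _ n])
    thus ?thesis unfolding PQ QP using X by simp
  qed
  show ?thesis
  proof
    assume "transpose_mat (transpose_mat Q * G * Q) = transpose_mat Q * G * Q"
    hence "transpose_mat Q * transpose_mat G * Q = transpose_mat Q * G * Q" using tr[OF G] by simp
    thus "transpose_mat G = G" using undo[OF G] undo[of "transpose_mat G"] G by simp
  qed (use tr[OF G] in simp)
qed

lemma four_block_intertwines:
  fixes G :: "'a :: field mat"
  assumes G: "G \<in> carrier_mat d d" and X: "X \<in> carrier_mat d k" and G': "G' \<in> carrier_mat k k"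
    and D: "D \<in> carrier_mat d d" and Y: "Y \<in> carrier_mat k k"
    and GD: "G * D = transpose_mat D * G" and XY: "X * Y = transpose_mat D * X"
    and G'Y: "G' * Y = transpose_mat Y * G'"
  shows "four_block_mat G X (0\<^sub>m k d) G' * four_block_mat D (0\<^sub>m d k) (0\<^sub>m k d) Y =
    transpose_mat (four_block_mat D (0\<^sub>m d k) (0\<^sub>m k d) Y) * four_block_mat G X (0\<^sub>m k d) G'"
proof -
  have DT: "transpose_mat D \<in> carrier_mat d d" and YT: "transpose_mat Y \<in> carrier_mat k k"
    using D Y by auto
  have tr: "transpose_mat (four_block_mat D (0\<^sub>m d k) (0\<^sub>m k d) Y)
    = four_block_mat (transpose_mat D) (0\<^sub>m d k) (0\<^sub>m k d) (transpose_mat Y)"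
    using transpose_four_block_mat[OF D zero_carrier_mat zero_carrier_mat Y] by simp
  show ?thesis
    unfolding tr mult_four_block_mat[OF G X zero_carrier_mat G' D zero_carrier_mat zero_carrier_mat Y]
      mult_four_block_mat[OF DT zero_carrier_mat zero_carrier_mat YT G X zero_carrier_mat G']
    by (rule cong_four_block_mat) (use G X G' D Y DT YT GD XY G'Y in auto)
qed

lemma intertwiner_pow_shift:
  fixes A :: "'a :: field mat"
  assumes A: "A \<in> carrier_mat n n" and g: "g \<in> carrier_mat n n" and gA: "g * A = transpose_mat A * g"
    and x: "x \<in> carrier_vec n" and y: "y \<in> carrier_vec n"
  shows "(A ^\<^sub>m i *\<^sub>v x) \<bullet> (g *\<^sub>v y) = x \<bullet> (g *\<^sub>v (A ^\<^sub>m i *\<^sub>v y))"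
  using x
proof (induct i arbitrary: x)
  case (Suc i)
  have Ax: "A *\<^sub>v x \<in> carrier_vec n" using A Suc(2) by simp
  have "(A ^\<^sub>m Suc i *\<^sub>v x) \<bullet> (g *\<^sub>v y) = (A *\<^sub>v x) \<bullet> (g *\<^sub>v (A ^\<^sub>m i *\<^sub>v y))"
    using Suc(1)[OF Ax] pow_mat_Suc_mult_vec'[OF A Suc(2)] by simp
  also have "\<dots> = x \<bullet> (transpose_mat A *\<^sub>v (g *\<^sub>v (A ^\<^sub>m i *\<^sub>v y)))"
    using transpose_vec_mult_scalar[of "transpose_mat A" n n "g *\<^sub>v (A ^\<^sub>m i *\<^sub>v y)" x] A g y Suc(2)
    by simp
  also have "transpose_mat A *\<^sub>v (g *\<^sub>v (A ^\<^sub>m i *\<^sub>v y)) = (g * A) *\<^sub>v (A ^\<^sub>m i *\<^sub>v y)"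
    unfolding gA using A g y by (simp add: assoc_mult_mat_vec[of _ n n _ n])
  also have "\<dots> = g *\<^sub>v (A ^\<^sub>m Suc i *\<^sub>v y)"
    using pow_mat_Suc_mult_vec[OF A y] pow_mat_Suc_mult_vec'[OF A y] A g y
    by (simp add: assoc_mult_mat_vec[of _ n n _ n])
  finally show ?case .
qed (use y g A in simp)

text \<open>For a cyclic vector \<open>v\<close>, the values \<open>a\<^sup>i v \<bullet> g a\<^sup>j v = v \<bullet> g a\<^bsup>i+j\<^esup> v\<close> of the form of an
  intertwiner \<open>g\<close> on a basis depend only on \<open>i + j\<close>.\<close>

lemma cyclic_intertwiner_symmetric:
  fixes A :: "'a :: field mat"
  assumes A: "A \<in> carrier_mat n n" and v: "v \<in> carrier_vec n" and g: "g \<in> carrier_mat n n"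
    and cyclic: "inj_mat (krylov_mat A v n)" and gA: "g * A = transpose_mat A * g"
  shows "transpose_mat g = g"
proof -
  let ?K = "krylov_mat A v n"
  have K: "?K \<in> carrier_mat n n" using A by simp
  obtain Ki where Ki: "Ki \<in> carrier_mat n n" "?K * Ki = 1\<^sub>m n"
    using inj_mat_inverse[OF K cyclic] by blast
  let ?S = "transpose_mat ?K * g * ?K"
  have S: "?S \<in> carrier_mat n n" using K g by simp
  have S_index: "?S $$ (i,j) = v \<bullet> (g *\<^sub>v (A ^\<^sub>m (i + j) *\<^sub>v v))" if ij: "i < n" "j < n" for i j
  proof -
    have "?S $$ (i,j) = row (transpose_mat ?K) i \<bullet> col (g * ?K) j"
      using ij K g by (simp add: assoc_mult_mat[of _ n n _ n _ n] del: col_mult2)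
    also have "\<dots> = (A ^\<^sub>m i *\<^sub>v v) \<bullet> (g *\<^sub>v (A ^\<^sub>m j *\<^sub>v v))"
      using ij K unfolding col_mult2[OF g K \<open>j < n\<close>] by (simp add: col_krylov_mat[OF A])
    also have "\<dots> = v \<bullet> (g *\<^sub>v (A ^\<^sub>m (i + j) *\<^sub>v v))"
      using intertwiner_pow_shift[OF A g gA v, of "A ^\<^sub>m j *\<^sub>v v" i] A by (simp add: pow_mat_add_mult_vec[OF A v])
    finally show ?thesis .
  qed
  have "?S $$ (j,i) = ?S $$ (i,j)" if "i < n" "j < n" for i j
    using that by (simp only: S_index add.commute)
  hence "transpose_mat ?S = ?S" using S by (intro eq_matI) auto
  thus ?thesis using congruence_symmetric_iff[OF Ki(1) K Ki(2) g] by simp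
qed

section \<open>The cyclic subspace of a vector with maximal local minimal polynomial\<close>

text \<open>The rows of \<open>dual_krylov_mat A l N\<close> are the functionals \<open>x \<mapsto> l \<bullet> A\<^sup>k x\<close>, \<open>k < N\<close>.\<close>

definition dual_krylov_mat :: "'a :: field mat \<Rightarrow> 'a vec \<Rightarrow> nat \<Rightarrow> 'a mat" where
  "dual_krylov_mat A l N = mat N (dim_row A) (\<lambda>(k,i). (transpose_mat (A ^\<^sub>m k) *\<^sub>v l) $ i)"

lemma dim_dual_krylov_mat [simp]:
  "dim_row (dual_krylov_mat A l N) = N" "dim_col (dual_krylov_mat A l N) = dim_row A"
  unfolding dual_krylov_mat_def by simp_all

lemma dual_krylov_mat_carrier [simp]:
  "A \<in> carrier_mat n n \<Longrightarrow> dual_krylov_mat A l N \<in> carrier_mat N n"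
  by auto

lemma dual_krylov_mat_mult_vec_index:
  assumes A: "A \<in> carrier_mat n n" and l: "l \<in> carrier_vec n" and x: "x \<in> carrier_vec n"
    and k: "k < N"
  shows "(dual_krylov_mat A l N *\<^sub>v x) $ k = l \<bullet> (A ^\<^sub>m k *\<^sub>v x)"
proof -
  have Ak: "A ^\<^sub>m k \<in> carrier_mat n n" using A by simp
  have "row (dual_krylov_mat A l N) k = vec n (\<lambda>i. (transpose_mat (A ^\<^sub>m k) *\<^sub>v l) $ i)"
    unfolding dual_krylov_mat_def using A k by simp
  also have "\<dots> = transpose_mat (A ^\<^sub>m k) *\<^sub>v l" using Ak by (intro eq_vecI) auto
  finally have "row (dual_krylov_mat A l N) k = transpose_mat (A ^\<^sub>m k) *\<^sub>v l" .
  hence "(dual_krylov_mat A l N *\<^sub>v x) $ k = (transpose_mat (A ^\<^sub>m k) *\<^sub>v l) \<bullet> x"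
    using A k by simp
  also have "\<dots> = l \<bullet> (A ^\<^sub>m k *\<^sub>v x)" using transpose_vec_mult_scalar[OF Ak x l] .
  finally show ?thesis .
qed

locale maximal_vector =
  fixes A :: "'a :: field mat" and n :: nat and v :: "'a vec"
  assumes A: "A \<in> carrier_mat n n" and v: "v \<in> carrier_vec n" and n_pos: "1 \<le> n"
    and maximal: "\<And>w. w \<in> carrier_vec n \<Longrightarrow> local_min_poly A w dvd local_min_poly A v"
begin

abbreviation "m \<equiv> local_min_poly A v"
abbreviation "d \<equiv> degree m"
abbreviation "K \<equiv> krylov_mat A v d"
abbreviation "D \<equiv> companion_mat m"

lemma min_poly_eq: "min_poly A = m"
  by (rule min_poly_eq_local_min_poly(2)[OF A v maximal])

lemma poly_mat_m: "poly_mat m A = 0\<^sub>m n n"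
  using min_poly_eq_local_min_poly(1)[OF A v maximal] by simp

lemma degree_pos: "1 \<le> d"
  by (rule degree_local_min_poly_pos[OF A v n_pos maximal])

lemma degree_le_dim: "d \<le> n"
  by (rule degree_local_min_poly_le[OF A v])

lemma K_carrier: "K \<in> carrier_mat n d"
  using A by simp

lemma D_carrier: "D \<in> carrier_mat d d"
  by simp

lemma col_K: "j < d \<Longrightarrow> col K j = A ^\<^sub>m j *\<^sub>v v"
  by (rule col_krylov_mat[OF A])

lemma inj_K: "inj_mat K"
  unfolding inj_mat_def
proof (intro ballI impI)
  fix c assume "c \<in> carrier_vec (dim_col K)" and Kc: "K *\<^sub>v c = 0\<^sub>v (dim_row K)"
  hence c: "c \<in> carrier_vec d" using K_carrier by simp
  \<comment> \<open>A relation among \<open>v, \<dots>, A\<^bsup>d-1\<^esup> v\<close> is a polynomial of degree \<open>< d\<close> killing \<open>v\<close>.\<close>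
  define f where "f = (\<Sum>j<d. monom (c $ j) j)"
  have "poly_mat f A *\<^sub>v v = K *\<^sub>v c"
    unfolding f_def by (rule krylov_mat_mult_vec[OF A v c, symmetric])
  also have "\<dots> = 0\<^sub>v n" using Kc A by simp
  finally have "poly_mat f A *\<^sub>v v = 0\<^sub>v n" .
  hence "m dvd f" using local_min_poly_dvd_iff[OF A v] by simp
  moreover have "degree f \<le> d - 1" unfolding f_def by (rule degree_le) (auto simp: coeff_sum_monom)
  ultimately have "f = 0" using dvd_imp_degree_le[of m f] degree_pos by (cases "f = 0") auto
  have "c $ k = 0" if "k < d" for k
    using arg_cong[OF \<open>f = 0\<close>, of "\<lambda>p. coeff p k"] that unfolding f_def coeff_sum_monom by simp
  thus "c = 0\<^sub>v (dim_col K)" using c K_carrier by (intro eq_vecI) auto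
qed

lemma pow_degree_mult_vec_index:
  assumes x: "x \<in> carrier_vec n" and i: "i < n"
  shows "(A ^\<^sub>m d *\<^sub>v x) $ i = - (\<Sum>k<d. coeff m k * (A ^\<^sub>m k *\<^sub>v x) $ i)"
proof -
  have "(\<Sum>k<d. coeff m k * (A ^\<^sub>m k *\<^sub>v x) $ i) + (A ^\<^sub>m d *\<^sub>v x) $ i
    = (\<Sum>k<Suc d. coeff m k * (A ^\<^sub>m k *\<^sub>v x) $ i)"
    using local_min_poly_monic[OF A v] by simp
  also have "\<dots> = (poly_mat m A *\<^sub>v x) $ i"
    by (rule poly_mat_mult_vec_index[OF A x i, symmetric]) (simp add: coeff_eq_0)
  also have "\<dots> = 0" using poly_mat_m x i by simp
  finally show ?thesis by (simp add: eq_neg_iff_add_eq_0 add.commute)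
qed

lemma scalar_pow_degree:
  assumes l: "l \<in> carrier_vec n" and x: "x \<in> carrier_vec n"
  shows "l \<bullet> (A ^\<^sub>m d *\<^sub>v x) = - (\<Sum>k<d. coeff m k * (l \<bullet> (A ^\<^sub>m k *\<^sub>v x)))"
proof -
  have "l \<bullet> (A ^\<^sub>m d *\<^sub>v x) = (\<Sum>i<n. l $ i * (A ^\<^sub>m d *\<^sub>v x) $ i)"
    using l A by (simp add: scalar_prod_def lessThan_atLeast0)
  also have "\<dots> = (\<Sum>i<n. l $ i * (- (\<Sum>k<d. coeff m k * (A ^\<^sub>m k *\<^sub>v x) $ i)))"
    by (intro sum.cong refl) (simp add: pow_degree_mult_vec_index[OF x])
  also have "\<dots> = - (\<Sum>k<d. coeff m k * (\<Sum>i<n. l $ i * (A ^\<^sub>m k *\<^sub>v x) $ i))"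
    by (simp add: sum_distrib_left sum_negf sum.swap[of _ "{..<n}"] algebra_simps)
  also have "\<dots> = - (\<Sum>k<d. coeff m k * (l \<bullet> (A ^\<^sub>m k *\<^sub>v x)))"
    using l A by (simp add: scalar_prod_def lessThan_atLeast0)
  finally show ?thesis .
qed

lemma mult_K: "A * K = K * D"
proof (rule eq_matI)
  fix i j assume "i < dim_row (K * D)" "j < dim_col (K * D)"
  hence i: "i < n" and j: "j < d" using K_carrier by auto
  have "(K * D) $$ (i,j) = (\<Sum>k<d. D $$ (k,j) * (A ^\<^sub>m k *\<^sub>v v) $ i)"
    using i carrier_matD[OF A] by (subst index_mult_mat_sum[OF K_carrier D_carrier i j])
      (auto intro!: sum.cong simp: krylov_mat_def)
  also have "\<dots> = (A ^\<^sub>m Suc j *\<^sub>v v) $ i"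
  proof (cases "Suc j < d")
    case False
    hence "Suc j = d" using j by simp
    thus ?thesis using sum_companion_mat_col[OF j] pow_degree_mult_vec_index[OF v i] by simp
  qed (simp add: sum_companion_mat_col[OF j])
  also have "\<dots> = (A *\<^sub>v col K j) $ i" using col_K[OF j] pow_mat_Suc_mult_vec[OF A v] by simp
  also have "\<dots> = (A * K) $$ (i,j)" using A K_carrier i j by simp
  finally show "(A * K) $$ (i,j) = (K * D) $$ (i,j)" ..
qed (use K_carrier in auto)

lemma dual_krylov_mult:
  assumes l: "l \<in> carrier_vec n"
  shows "dual_krylov_mat A l d * A = transpose_mat D * dual_krylov_mat A l d"
proof (rule mat_eq_by_mult_vec)
  let ?\<Phi> = "dual_krylov_mat A l d"
  have \<Phi>: "?\<Phi> \<in> carrier_mat d n" using A by simp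
  show "?\<Phi> * A \<in> carrier_mat d n" using \<Phi> A by (rule mult_carrier_mat)
  show "transpose_mat D * ?\<Phi> \<in> carrier_mat d n" using \<Phi> by (intro mult_carrier_mat) auto
  fix x :: "'a vec" assume x: "x \<in> carrier_vec n"
  show "(?\<Phi> * A) *\<^sub>v x = (transpose_mat D * ?\<Phi>) *\<^sub>v x"
  proof (intro eq_vecI)
    fix k assume "k < dim_vec ((transpose_mat D * ?\<Phi>) *\<^sub>v x)"
    hence k: "k < d" by simp
    have "((?\<Phi> * A) *\<^sub>v x) $ k = (?\<Phi> *\<^sub>v (A *\<^sub>v x)) $ k"
      using assoc_mult_mat_vec[OF \<Phi> A x] by simp
    also have "\<dots> = l \<bullet> (A ^\<^sub>m Suc k *\<^sub>v x)"
      using dual_krylov_mat_mult_vec_index[OF A l _ k, of "A *\<^sub>v x"] pow_mat_Suc_mult_vec'[OF A x] A x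
      by simp
    also have "\<dots> = (\<Sum>j<d. D $$ (j,k) * (l \<bullet> (A ^\<^sub>m j *\<^sub>v x)))"
    proof (cases "Suc k < d")
      case False
      hence "Suc k = d" using k by simp
      thus ?thesis using sum_companion_mat_col[OF k] scalar_pow_degree[OF l x] by simp
    qed (simp add: sum_companion_mat_col[OF k])
    also have "\<dots> = (\<Sum>j<d. transpose_mat D $$ (k,j) * (?\<Phi> *\<^sub>v x) $ j)"
      using k by (intro sum.cong refl)
        (simp add: dual_krylov_mat_mult_vec_index[OF A l x] del: index_mult_mat_vec)
    also have "\<dots> = (transpose_mat D *\<^sub>v (?\<Phi> *\<^sub>v x)) $ k"
      using \<Phi> x k by (intro index_mult_mat_vec_sum[symmetric]) auto
    also have "\<dots> = ((transpose_mat D * ?\<Phi>) *\<^sub>v x) $ k"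
      using \<Phi> x by (simp add: assoc_mult_mat_vec[of _ d d _ n])
    finally show "((?\<Phi> * A) *\<^sub>v x) $ k = ((transpose_mat D * ?\<Phi>) *\<^sub>v x) $ k" .
  qed simp
qed

lemma hankel_index:
  assumes l: "l \<in> carrier_vec n" and i: "i < d" and j: "j < d"
  shows "(dual_krylov_mat A l d * K) $$ (i,j) = l \<bullet> (A ^\<^sub>m (i + j) *\<^sub>v v)"
proof -
  have "(dual_krylov_mat A l d * K) $$ (i,j) = (dual_krylov_mat A l d *\<^sub>v col K j) $ i"
    using i j A by simp
  also have "\<dots> = l \<bullet> (A ^\<^sub>m i *\<^sub>v (A ^\<^sub>m j *\<^sub>v v))"
    using dual_krylov_mat_mult_vec_index[OF A l _ i] col_K[OF j] A by simp
  finally show ?thesis by (simp add: pow_mat_add_mult_vec[OF A v])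
qed

lemma hankel_symmetric:
  assumes l: "l \<in> carrier_vec n"
  shows "transpose_mat (dual_krylov_mat A l d * K) = dual_krylov_mat A l d * K"
proof -
  have "(dual_krylov_mat A l d * K) $$ (j,i) = (dual_krylov_mat A l d * K) $$ (i,j)"
    if "i < d" "j < d" for i j
    using that by (simp only: hankel_index[OF l] add.commute)
  thus ?thesis using A by (intro eq_matI) auto
qed

lemma hankel_mult_companion:
  assumes l: "l \<in> carrier_vec n"
  shows "(dual_krylov_mat A l d * K) * D = transpose_mat D * (dual_krylov_mat A l d * K)"
proof -
  have \<Phi>: "dual_krylov_mat A l d \<in> carrier_mat d n" using A by simp
  have D': "transpose_mat D \<in> carrier_mat d d" by simp
  have "(dual_krylov_mat A l d * K) * D = dual_krylov_mat A l d * (A * K)"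
    using \<Phi> K_carrier by (simp add: assoc_mult_mat[OF \<Phi> K_carrier D_carrier] mult_K)
  also have "\<dots> = (dual_krylov_mat A l d * A) * K" using assoc_mult_mat[OF \<Phi> A K_carrier] by simp
  also have "\<dots> = transpose_mat D * (dual_krylov_mat A l d * K)"
    unfolding dual_krylov_mult[OF l] using assoc_mult_mat[OF D' \<Phi> K_carrier] .
  finally show ?thesis .
qed

definition normalizing :: "'a vec \<Rightarrow> bool" where
  "normalizing l \<longleftrightarrow> l \<in> carrier_vec n \<and> (\<forall>j<d. l \<bullet> (A ^\<^sub>m j *\<^sub>v v) = (if j = d - 1 then 1 else 0))"

lemma exists_normalizing: "\<exists>l. normalizing l"
proof -
  \<comment> \<open>Extend \<open>K\<close> to an invertible matrix and take the row of its inverse dual to \<open>A\<^bsup>d-1\<^esup> v\<close>.\<close>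
  obtain M where M: "M \<in> carrier_mat n (n - d)" and inj: "inj_mat (hcat K M)"
    using inj_mat_extend[OF K_carrier inj_K degree_le_dim] by blast
  have P: "hcat K M \<in> carrier_mat n n" using hcat_carrier[OF K_carrier M] degree_le_dim by simp
  obtain R where R: "R \<in> carrier_mat n n" "R * hcat K M = 1\<^sub>m n"
    using inj_mat_inverse[OF P inj] by blast
  have "row R (d - 1) \<bullet> (A ^\<^sub>m j *\<^sub>v v) = (if j = d - 1 then 1 else 0)" if j: "j < d" for j
  proof -
    have "(R * hcat K M) $$ (d - 1, j) = row R (d - 1) \<bullet> col (hcat K M) j"
      by (rule index_mult_mat(1)) (use R P j degree_le_dim in auto)
    hence "row R (d - 1) \<bullet> (A ^\<^sub>m j *\<^sub>v v) = (R * hcat K M) $$ (d - 1, j)"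
      using col_hcat(1)[OF K_carrier M j] col_K[OF j] by simp
    also have "\<dots> = (if j = d - 1 then 1 else 0)" using R(2) j degree_le_dim by auto
    finally show ?thesis .
  qed
  moreover have "row R (d - 1) \<in> carrier_vec n" using R(1) by (intro carrier_vecI) simp
  ultimately show ?thesis unfolding normalizing_def by blast
qed

lemma inj_hankel:
  assumes "normalizing l"
  shows "inj_mat (dual_krylov_mat A l d * K)"
  using assms A unfolding normalizing_def
  by (intro hankel_triangular_inj[where h = "\<lambda>t. l \<bullet> (A ^\<^sub>m t *\<^sub>v v)"])
    (auto simp: hankel_index simp del: index_mult_mat(1))

lemma exists_symmetric_companion_intertwiner:
  "\<exists>H \<in> carrier_mat d d. transpose_mat H = H \<and> det H \<noteq> 0 \<and> H * D = transpose_mat D * H"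
proof -
  obtain l where l: "normalizing l" using exists_normalizing by blast
  hence "l \<in> carrier_vec n" unfolding normalizing_def by simp
  moreover have "dual_krylov_mat A l d * K \<in> carrier_mat d d"
    using mult_carrier_mat[OF dual_krylov_mat_carrier[OF A] K_carrier] .
  ultimately show ?thesis
    using hankel_symmetric hankel_mult_companion inj_hankel[OF l] inj_mat_iff_det by blast
qed

lemma exists_complement_in_kernel:
  assumes l: "normalizing l"
  shows "\<exists>N \<in> carrier_mat n (n - d). inj_mat (hcat K N) \<and> dual_krylov_mat A l d * N = 0\<^sub>m d (n - d)"
proof -
  let ?k = "n - d" and ?\<Phi> = "dual_krylov_mat A l d"
  let ?H = "?\<Phi> * K"
  have \<Phi>: "?\<Phi> \<in> carrier_mat d n" using A by simp
  have H: "?H \<in> carrier_mat d d" using \<Phi> K_carrier by simp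
  obtain M where M: "M \<in> carrier_mat n ?k" and inj_KM: "inj_mat (hcat K M)"
    using inj_mat_extend[OF K_carrier inj_K degree_le_dim] by blast
  obtain Hi where Hi: "Hi \<in> carrier_mat d d" "?H * Hi = 1\<^sub>m d"
    using inj_mat_inverse[OF H inj_hankel[OF l]] by blast
  \<comment> \<open>Project the columns of \<open>M\<close> along the cyclic subspace onto the kernel of \<open>\<Phi>\<close>.\<close>
  define Z where "Z = Hi * (?\<Phi> * M)"
  define N where "N = M - K * Z"
  have Z: "Z \<in> carrier_mat d ?k" unfolding Z_def using Hi \<Phi> M by simp
  have N: "N \<in> carrier_mat n ?k" unfolding N_def using K_carrier Z by (intro minus_carrier_mat) simp
  have "?\<Phi> * N = ?\<Phi> * M - ?H * Z"
    unfolding N_def using \<Phi> M K_carrier Z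
    by (simp add: mult_minus_distrib_mat[of _ d n] assoc_mult_mat[of _ d n _ d _ ?k])
  also have "?H * Z = ?\<Phi> * M"
    unfolding Z_def using H Hi \<Phi> M by (simp add: assoc_mult_mat[of _ d d _ d _ ?k, symmetric])
  finally have \<Phi>N: "?\<Phi> * N = 0\<^sub>m d ?k" using \<Phi> M by simp
  have "inj_mat (hcat K N)" unfolding N_def by (rule inj_mat_hcat_shear[OF K_carrier M Z inj_KM])
  thus ?thesis using N \<Phi>N by blast
qed

lemma kernel_complement_invariant:
  assumes l: "normalizing l" and N: "N \<in> carrier_mat n (n - d)" and inj: "inj_mat (hcat K N)"
    and \<Phi>N: "dual_krylov_mat A l d * N = 0\<^sub>m d (n - d)"
  shows "\<exists>Y \<in> carrier_mat (n - d) (n - d). A * N = N * Y"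
proof -
  let ?k = "n - d" and ?\<Phi> = "dual_krylov_mat A l d"
  have \<Phi>: "?\<Phi> \<in> carrier_mat d n" using A by simp
  have lc: "l \<in> carrier_vec n" using l unfolding normalizing_def by simp
  have dk: "d + ?k = n" using degree_le_dim by simp
  have "\<exists>y \<in> carrier_vec ?k. A *\<^sub>v col N j = N *\<^sub>v y" if j: "j < ?k" for j
  proof -
    have cN: "col N j \<in> carrier_vec n" using N by (intro carrier_vecI) simp
    obtain x y where x: "x \<in> carrier_vec d" and y: "y \<in> carrier_vec ?k"
      and u: "A *\<^sub>v col N j = K *\<^sub>v x + N *\<^sub>v y"
      using hcat_inj_decompose[OF K_carrier N dk inj, of "A *\<^sub>v col N j"] A cN by auto
    \<comment> \<open>\<open>\<Phi>\<close> intertwines \<open>A\<close> with \<open>D\<^sup>T\<close> and kills \<open>N\<close>, hence kills \<open>A N\<close>; on \<open>K x + N y\<close> it gives \<open>H x\<close>.\<close>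
    have "(?\<Phi> * K) *\<^sub>v x = ?\<Phi> *\<^sub>v (A *\<^sub>v col N j)"
      unfolding u using \<Phi> K_carrier N x y \<Phi>N
      by (simp add: mult_add_distrib_mat_vec[of _ d n] assoc_mult_mat_vec[of _ d n _ ?k, symmetric])
    also have "\<dots> = transpose_mat D *\<^sub>v (?\<Phi> *\<^sub>v col N j)"
      using \<Phi> A cN dual_krylov_mult[OF lc]
      by (simp add: assoc_mult_mat_vec[of _ d n _ n, symmetric] assoc_mult_mat_vec[of _ d d _ n, symmetric])
    also have "?\<Phi> *\<^sub>v col N j = col (?\<Phi> * N) j" by (rule col_mult2[OF \<Phi> N j, symmetric])
    also have "transpose_mat D *\<^sub>v \<dots> = 0\<^sub>v d" using \<Phi>N j by simp
    finally have "x = 0\<^sub>v d"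
      using inj_matD[OF inj_hankel[OF l] mult_carrier_mat[OF \<Phi> K_carrier] x] by simp
    thus ?thesis using u y K_carrier N by auto
  qed
  then obtain yf where yf: "\<And>j. j < ?k \<Longrightarrow> yf j \<in> carrier_vec ?k \<and> A *\<^sub>v col N j = N *\<^sub>v yf j"
    by metis
  define Y where "Y = mat ?k ?k (\<lambda>(i,j). yf j $ i)"
  have Y: "Y \<in> carrier_mat ?k ?k" unfolding Y_def by simp
  have "A * N = N * Y"
  proof (rule mat_col_eqI)
    fix j assume "j < dim_col (N * Y)"
    hence j: "j < ?k" using Y by simp
    have "col Y j = yf j" using yf[OF j] j by (intro eq_vecI) (auto simp: Y_def)
    thus "col (A * N) j = col (N * Y) j"
      unfolding col_mult2[OF A N j] col_mult2[OF N Y j] using yf[OF j] by simp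
  qed (use A N Y in auto)
  with Y show ?thesis by blast
qed

lemma exists_invariant_complement:
  "\<exists>N \<in> carrier_mat n (n - d). \<exists>Y \<in> carrier_mat (n - d) (n - d).
     inj_mat (hcat K N) \<and> A * N = N * Y"
proof -
  obtain l where l: "normalizing l" using exists_normalizing by blast
  then obtain N where "N \<in> carrier_mat n (n - d)" "inj_mat (hcat K N)"
    "dual_krylov_mat A l d * N = 0\<^sub>m d (n - d)"
    using exists_complement_in_kernel by blast
  thus ?thesis using kernel_complement_invariant[OF l] by blast
qed

lemma block_diag_similar:
  assumes N: "N \<in> carrier_mat n (n - d)" and Y: "Y \<in> carrier_mat (n - d) (n - d)"
    and AN: "A * N = N * Y"
  shows "A * hcat K N = hcat K N * four_block_mat D (0\<^sub>m d (n - d)) (0\<^sub>m (n - d) d) Y"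
  using mult_hcat[OF A K_carrier N] hcat_mult_block_diag[OF K_carrier N D_carrier Y] mult_K AN
  by simp

lemma exists_nonzero_intertwiner:
  assumes N: "N \<in> carrier_mat n (n - d)" and Y: "Y \<in> carrier_mat (n - d) (n - d)"
    and inj: "inj_mat (hcat K N)" and AN: "A * N = N * Y" and lt: "d < n"
  shows "\<exists>X \<in> carrier_mat d (n - d). X \<noteq> 0\<^sub>m d (n - d) \<and> X * Y = transpose_mat D * X"
proof -
  let ?k = "n - d"
  have k: "0 < ?k" using lt by simp
  have cN: "col N 0 \<in> carrier_vec n" using N by (intro carrier_vecI) simp
  \<comment> \<open>The first column of \<open>N\<close> is nonzero, so some coordinate functional does not vanish on it.\<close>
  have "col N 0 \<noteq> 0\<^sub>v n"
  proof
    assume c0: "col N 0 = 0\<^sub>v n"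
    have e: "0\<^sub>v d @\<^sub>v unit_vec ?k 0 \<in> carrier_vec (d + ?k)" by simp
    have "hcat K N *\<^sub>v (0\<^sub>v d @\<^sub>v unit_vec ?k 0) = N *\<^sub>v unit_vec ?k 0"
      using hcat_mult_vec[OF K_carrier N, of "0\<^sub>v d" "unit_vec ?k 0"] K_carrier N by simp
    also have "\<dots> = col N 0" using N k by (intro eq_vecI) (auto simp: mult_unit_vec_index[OF N])
    finally have "0\<^sub>v d @\<^sub>v unit_vec ?k 0 = (0\<^sub>v (d + ?k) :: 'a vec)"
      using inj_matD[OF inj hcat_carrier[OF K_carrier N] e] c0 lt by simp
    hence "(0\<^sub>v d @\<^sub>v unit_vec ?k 0 :: 'a vec) $ d = 0" using lt by simp
    thus False using k by simp
  qed
  then obtain i where i: "i < n" "col N 0 $ i \<noteq> 0"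
    using cN by (metis eq_vecI carrier_vecD index_zero_vec)
  define l :: "'a vec" where "l = unit_vec n i"
  have l: "l \<in> carrier_vec n" unfolding l_def by simp
  define X where "X = dual_krylov_mat A l d * N"
  have \<Phi>: "dual_krylov_mat A l d \<in> carrier_mat d n" using A by simp
  have X: "X \<in> carrier_mat d ?k" unfolding X_def using \<Phi> N by simp
  have "X $$ (0,0) = (dual_krylov_mat A l d *\<^sub>v col N 0) $ 0"
    unfolding X_def using \<Phi> N k degree_pos by simp
  also have "\<dots> = col N 0 $ i"
    using dual_krylov_mat_mult_vec_index[OF A l cN, of 0 d] degree_pos cN i A
    by (simp add: l_def)
  finally have "X \<noteq> 0\<^sub>m d ?k" using i(2) degree_pos k by auto
  moreover have "X * Y = transpose_mat D * X"
    unfolding X_def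
    using assoc_mult_mat[OF \<Phi> N Y] assoc_mult_mat[OF \<Phi> A N, symmetric] AN dual_krylov_mult[OF l]
      assoc_mult_mat[of "transpose_mat D" d d "dual_krylov_mat A l d" n N ?k] \<Phi> N
    by simp
  ultimately show ?thesis using X by blast
qed

lemma cyclic_iff: "min_poly A = char_poly A \<longleftrightarrow> d = n"
proof
  assume "min_poly A = char_poly A"
  thus "d = n" using degree_monic_char_poly[OF A] min_poly_eq by simp
next
  assume dn: "d = n"
  have Kc: "K \<in> carrier_mat n n" using K_carrier dn by simp
  obtain Ki where Ki: "Ki \<in> carrier_mat n n" "K * Ki = 1\<^sub>m n" "Ki * K = 1\<^sub>m n"
    using inj_mat_inverse[OF Kc inj_K] by blast
  have AKD: "A = K * D * Ki"
    using mult_K assoc_mult_mat[OF A Kc Ki(1)] Ki(2) A by simp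
  have "similar_mat A D"
    unfolding similar_mat_def similar_mat_wit_def Let_def
    by (rule exI[of _ K], rule exI[of _ Ki]) (use A Kc Ki dn AKD in auto)
  hence "char_poly A = char_poly D" by (rule char_poly_similar)
  thus "min_poly A = char_poly A"
    using char_poly_companion_mat[OF local_min_poly_monic[OF A v]] min_poly_eq by simp
qed

lemma intertwiner_from_block_diag:
  assumes N: "N \<in> carrier_mat n (n - d)" and Y: "Y \<in> carrier_mat (n - d) (n - d)"
    and inj: "inj_mat (hcat K N)" and AN: "A * N = N * Y"
    and G: "G \<in> carrier_mat n n"
    and GB: "G * four_block_mat D (0\<^sub>m d (n - d)) (0\<^sub>m (n - d) d) Y
      = transpose_mat (four_block_mat D (0\<^sub>m d (n - d)) (0\<^sub>m (n - d) d) Y) * G"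
  shows "\<exists>g \<in> carrier_mat n n. g * A = transpose_mat A * g
    \<and> (det G \<noteq> 0 \<longrightarrow> det g \<noteq> 0) \<and> (transpose_mat g = g \<longleftrightarrow> transpose_mat G = G)"
proof -
  let ?B = "four_block_mat D (0\<^sub>m d (n - d)) (0\<^sub>m (n - d) d) Y"
  let ?P = "hcat K N"
  have dk: "d + (n - d) = n" using degree_le_dim by simp
  have P: "?P \<in> carrier_mat n n" using hcat_carrier[OF K_carrier N] dk by simp
  have B: "?B \<in> carrier_mat n n" using four_block_carrier_mat[OF D_carrier Y] dk by simp
  obtain Q where Q: "Q \<in> carrier_mat n n" "?P * Q = 1\<^sub>m n" "Q * ?P = 1\<^sub>m n"
    using inj_mat_inverse[OF P inj] by blast
  have "Q * A = Q * (A * ?P) * Q"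
    using A P Q by (simp add: assoc_mult_mat[of _ n n _ n _ n])
  also have "\<dots> = (Q * ?P) * ?B * Q"
    unfolding block_diag_similar[OF N Y AN] using P B Q(1) by (simp add: assoc_mult_mat[of _ n n _ n _ n])
  also have "\<dots> = ?B * Q" unfolding Q(3) left_mult_one_mat[OF B] ..
  finally have QA: "Q * A = ?B * Q" .
  have "det Q \<noteq> 0" using det_mult[OF Q(1) P] Q(3) by auto
  hence "det G \<noteq> 0 \<longrightarrow> det (transpose_mat Q * G * Q) \<noteq> 0"
    using Q(1) G by (simp add: det_mult[of _ n] det_transpose)
  moreover have "transpose_mat Q * G * Q \<in> carrier_mat n n" using Q(1) G by simp
  ultimately show ?thesis
    using congruence_intertwines[OF A B Q(1) G QA GB] congruence_symmetric_iff[OF P Q(1) Q(3) G]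
    by blast
qed

end

lemma exists_maximal_vector:
  assumes "A \<in> carrier_mat n n" and "1 \<le> n"
  shows "\<exists>v. maximal_vector A n v"
proof -
  obtain v where "v \<in> carrier_vec n" "\<forall>w \<in> carrier_vec n. local_min_poly A w dvd local_min_poly A v"
    using exists_maximal_local_min_poly[OF assms(1)] by blast
  hence "maximal_vector A n v" using assms by unfold_locales auto
  thus ?thesis ..
qed

lemma exists_symmetric_intertwiner:
  fixes a :: "'a :: field mat"
  assumes "a \<in> carrier_mat n n"
  shows "\<exists>g \<in> carrier_mat n n. det g \<noteq> 0 \<and> transpose_mat g = g \<and> g * a = transpose_mat a * g"
  using assms
proof (induct n arbitrary: a rule: less_induct)
  case (less n a)
  show ?case
  proof (cases "n = 0")
    case True
    then show ?thesis using less(2) by (intro bexI[of _ "1\<^sub>m 0"]) (auto intro!: eq_matI)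
  next
    case False
    have "1 \<le> n" using False by simp
    then obtain v where "maximal_vector a n v" using exists_maximal_vector[OF less(2)] by blast
    then interpret maximal_vector a n v .
    obtain N Y where N: "N \<in> carrier_mat n (n - d)" and Y: "Y \<in> carrier_mat (n - d) (n - d)"
      and inj: "inj_mat (hcat K N)" and AN: "a * N = N * Y"
      using exists_invariant_complement by blast
    obtain H where H: "H \<in> carrier_mat d d" "transpose_mat H = H" "det H \<noteq> 0"
      "H * D = transpose_mat D * H"
      using exists_symmetric_companion_intertwiner by blast
    obtain G' where G': "G' \<in> carrier_mat (n - d) (n - d)" "det G' \<noteq> 0" "transpose_mat G' = G'"
      "G' * Y = transpose_mat Y * G'"
      using less(1)[OF _ Y] degree_pos False by auto
    define G where "G = four_block_mat H (0\<^sub>m d (n - d)) (0\<^sub>m (n - d) d) G'"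
    have "G \<in> carrier_mat n n"
      unfolding G_def using four_block_carrier_mat[OF H(1) G'(1)] degree_le_dim by simp
    moreover have "G * four_block_mat D (0\<^sub>m d (n - d)) (0\<^sub>m (n - d) d) Y
      = transpose_mat (four_block_mat D (0\<^sub>m d (n - d)) (0\<^sub>m (n - d) d) Y) * G"
      unfolding G_def using H(1,4) G'(1,4) Y by (intro four_block_intertwines) auto
    moreover have "det G \<noteq> 0"
      unfolding G_def det_four_block_mat_lower_left_zero[OF H(1) zero_carrier_mat refl G'(1)]
      using H(3) G'(2) by simp
    moreover have "transpose_mat G = G"
      unfolding G_def using transpose_four_block_mat[OF H(1) zero_carrier_mat zero_carrier_mat G'(1)]
        H(2) G'(3) by simp
    ultimately show ?thesis using intertwiner_from_block_diag[OF N Y inj AN] by blast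
  qed
qed

lemma exists_nonsymmetric_intertwiner:
  fixes a :: "'a :: field mat"
  assumes a: "a \<in> carrier_mat n n" and n: "1 \<le> n" and non_cyclic: "min_poly a \<noteq> char_poly a"
  shows "\<exists>g \<in> carrier_mat n n. det g \<noteq> 0 \<and> transpose_mat g \<noteq> g \<and> g * a = transpose_mat a * g"
proof -
  obtain v where "maximal_vector a n v" using exists_maximal_vector[OF a n] by blast
  then interpret maximal_vector a n v .
  have lt: "d < n" using cyclic_iff non_cyclic degree_le_dim by simp
  obtain N Y where N: "N \<in> carrier_mat n (n - d)" and Y: "Y \<in> carrier_mat (n - d) (n - d)"
    and inj: "inj_mat (hcat K N)" and AN: "a * N = N * Y"
    using exists_invariant_complement by blast
  obtain H where H: "H \<in> carrier_mat d d" "det H \<noteq> 0" "H * D = transpose_mat D * H"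
    using exists_symmetric_companion_intertwiner by blast
  obtain X where X: "X \<in> carrier_mat d (n - d)" "X \<noteq> 0\<^sub>m d (n - d)" "X * Y = transpose_mat D * X"
    using exists_nonzero_intertwiner[OF N Y inj AN lt] by blast
  obtain G' where G': "G' \<in> carrier_mat (n - d) (n - d)" "det G' \<noteq> 0"
    "G' * Y = transpose_mat Y * G'"
    using exists_symmetric_intertwiner[OF Y] by blast
  define G where "G = four_block_mat H X (0\<^sub>m (n - d) d) G'"
  have dk: "d + (n - d) = n" using degree_le_dim by simp
  have "G \<in> carrier_mat n n" unfolding G_def using four_block_carrier_mat[OF H(1) G'(1)] dk by simp
  moreover have "G * four_block_mat D (0\<^sub>m d (n - d)) (0\<^sub>m (n - d) d) Y
    = transpose_mat (four_block_mat D (0\<^sub>m d (n - d)) (0\<^sub>m (n - d) d) Y) * G"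
    unfolding G_def using H(1,3) X(1,3) G'(1,3) Y by (intro four_block_intertwines) auto
  moreover have "det G \<noteq> 0"
    unfolding G_def det_four_block_mat_lower_left_zero[OF H(1) X(1) refl G'(1)] using H(2) G'(2) by simp
  moreover have "transpose_mat G \<noteq> G"
  proof
    assume sym: "transpose_mat G = G"
    obtain i j where ij: "i < d" "j < n - d" "X $$ (i,j) \<noteq> 0"
      using X(1,2) by (metis eq_matI carrier_matD index_zero_mat(1,2,3))
    have "G $$ (i, d + j) = X $$ (i,j)" unfolding G_def using H(1) X(1) G'(1) ij by simp
    moreover have "G $$ (d + j, i) = 0" unfolding G_def using H(1) X(1) G'(1) ij by simp
    moreover have "transpose_mat G $$ (i, d + j) = G $$ (d + j, i)"
      using \<open>G \<in> carrier_mat n n\<close> ij dk by simp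
    ultimately show False using sym ij by simp
  qed
  ultimately show ?thesis using intertwiner_from_block_diag[OF N Y inj AN] by blast
qed

lemma intertwiner_symmetric_if_min_poly_eq_char_poly:
  fixes a :: "'a :: field mat"
  assumes a: "a \<in> carrier_mat n n" and n: "1 \<le> n" and cyclic: "min_poly a = char_poly a"
    and g: "g \<in> carrier_mat n n" and ga: "g * a = transpose_mat a * g"
  shows "transpose_mat g = g"
proof -
  obtain v where "maximal_vector a n v" using exists_maximal_vector[OF a n] by blast
  then interpret maximal_vector a n v .
  have "inj_mat (krylov_mat a v n)" using inj_K cyclic_iff cyclic by simp
  thus ?thesis using cyclic_intertwiner_symmetric[OF a v g _ ga] by simp
qed

section \<open>The general linear group\<close>

lemma invertible_mat_iff_det:
  fixes g :: "'a :: field mat"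
  assumes g: "g \<in> carrier_mat n n"
  shows "invertible_mat g \<longleftrightarrow> det g \<noteq> 0"
proof
  assume "invertible_mat g"
  then obtain B where gB: "g * B = 1\<^sub>m (dim_row g)" and Bg: "B * g = 1\<^sub>m (dim_row B)"
    unfolding invertible_mat_def inverts_mat_def by blast
  have B: "B \<in> carrier_mat n n"
    using arg_cong[OF gB, of dim_col] arg_cong[OF Bg, of dim_col] g by auto
  have "det g * det B = det (g * B)" by (rule det_mult[OF g B, symmetric])
  hence "det g * det B = 1" using gB g by simp
  thus "det g \<noteq> 0" by auto
next
  assume "det g \<noteq> 0"
  then obtain B where "B \<in> carrier_mat n n" "g * B = 1\<^sub>m n" "B * g = 1\<^sub>m n"
    using det_non_zero_imp_unit[OF g, of "()"] unfolding Units_def ring_mat_def by auto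
  thus "invertible_mat g" unfolding invertible_mat_def inverts_mat_def using g by auto
qed

lemma GL_iff_det: "g \<in> GL n \<longleftrightarrow> g \<in> carrier_mat n n \<and> det g \<noteq> 0"
  unfolding GL_def using invertible_mat_iff_det by blast

lemma inv_mat:
  fixes g :: "'a :: field mat"
  assumes g: "g \<in> GL n"
  shows "inv_mat g \<in> carrier_mat n n" "g * inv_mat g = 1\<^sub>m n" "inv_mat g * g = 1\<^sub>m n"
proof -
  have gc: "g \<in> carrier_mat n n" and "det g \<noteq> 0" using g by (auto simp: GL_iff_det)
  hence "g \<in> Units (ring_mat TYPE('a) n ())" by (rule det_non_zero_imp_unit)
  then obtain B where "mat_inverse g = Some B"
    using mat_inverse(1)[OF gc, of "()"] by (cases "mat_inverse g") auto
  thus "inv_mat g \<in> carrier_mat n n" "g * inv_mat g = 1\<^sub>m n" "inv_mat g * g = 1\<^sub>m n"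
    using mat_inverse(2)[OF gc] unfolding inv_mat_def by auto
qed

lemma conj_eq_transpose_iff:
  fixes a g :: "'a :: field mat"
  assumes g: "g \<in> GL n" and a: "a \<in> carrier_mat n n"
  shows "g * a * inv_mat g = transpose_mat a \<longleftrightarrow> g * a = transpose_mat a * g"
proof -
  have gc: "g \<in> carrier_mat n n" using g by (simp add: GL_iff_det)
  note inv = inv_mat[OF g]
  have "g * a = (g * a * inv_mat g) * g"
    using gc a inv by (simp add: assoc_mult_mat[of _ n n _ n _ n])
  moreover have "transpose_mat a * g * inv_mat g = transpose_mat a"
    using gc a inv by (simp add: assoc_mult_mat[of _ n n _ n _ n])
  ultimately show ?thesis by metis
qed

theorem mainTheorem3:
  fixes a :: "'a :: field mat" and n :: nat
  assumes "n \<ge> 1" and "a \<in> carrier_mat n n"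
  shows "(\<exists>g \<in> GL n. g * a * inv_mat g = transpose_mat a \<and> transpose_mat g = g)
       \<and> (min_poly a = char_poly a \<longrightarrow>
           (\<forall>g \<in> GL n. g * a * inv_mat g = transpose_mat a \<longrightarrow> transpose_mat g = g))
       \<and> (min_poly a \<noteq> char_poly a \<longrightarrow>
           (\<exists>g \<in> GL n. g * a * inv_mat g = transpose_mat a \<and> transpose_mat g \<noteq> g))"
proof (intro conjI impI ballI)
  note n = assms(1) and a = assms(2)
  show "\<exists>g \<in> GL n. g * a * inv_mat g = transpose_mat a \<and> transpose_mat g = g"
    using exists_symmetric_intertwiner[OF a] conj_eq_transpose_iff[OF _ a] by (auto simp: GL_iff_det)
  show "transpose_mat g = g"
    if "min_poly a = char_poly a" "g \<in> GL n" "g * a * inv_mat g = transpose_mat a" for g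
    using intertwiner_symmetric_if_min_poly_eq_char_poly[OF a n that(1)] conj_eq_transpose_iff[OF that(2) a]
      that(2,3) by (simp add: GL_iff_det)
  show "\<exists>g \<in> GL n. g * a * inv_mat g = transpose_mat a \<and> transpose_mat g \<noteq> g"
    if "min_poly a \<noteq> char_poly a"
    using exists_nonsymmetric_intertwiner[OF a n that] conj_eq_transpose_iff[OF _ a]
    by (auto simp: GL_iff_det)
qed

end
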